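(* Let $t\ge3$ be an integer, and let $Q$ be a $(2P_3,C_4,C_6,C_7,T_0,(t+1)\text{-pentagon})$-free $t$-frame with an associated $t$-frame partition $(A;B_1,\dots,B_t;C_1,\dots,C_t)$. Set $B:=B_1\cup\dots\cup B_t$ and $C:=C_1\cup\dots\cup C_t$. Let $A=\{a_1,\dots,a_r\}$ be ordered so that $d_Q(a_r)\le\dots\le d_Q(a_1)$, and for each $i\in\{1,\dots,t\}$ let $B_i=\{b^i_1,\dots,b^i_{r_i}\}$ be ordered so that $d_Q(b^i_{r_i})\le\dots\le d_Q(b^i_1)$ and $C_i=\{c^i_1,\dots,c^i_{s_i}\}$ be ordered so that $d_Q(c^i_{s_i})\le\dots\le d_Q(c^i_1)$. Then: (a) $A,B_1,\dots,B_t,C_1,\dots,C_t$ are cliques; (b) either $A$ is complete to $B$, or all of the following hold: $t=3$; there exists $i^*\in\{1,2,3\}$ such that $B\setminus B_{i^*}\subseteq N_Q(a_r)\cap B\subseteq\dots\subseteq N_Q(a_1)\cap B=B$ (in particular $A$ is complete to $B\setminus B_{i^*}$); and for all $i\in\{1,2,3\}$, $B_i$ is complete to $C_i$; (c) for all $i\in\{1,\dots,t\}$: $\{c^i_1\}\subseteq N_Q(b^i_{r_i})\cap C_i\subseteq\dots\subseteq N_Q(b^i_1)\cap C_i=C_i$, and $\{b^i_1\}\subseteq N_Q(c^i_{s_i})\cap B_i\subseteq\dots\subseteq N_Q(c^i_1)\cap B_i=B_i$; (d) if $A$ is complete to $B$, then $Q$ is a $t$-villa with $t$-villa partition $(A;B_1,\dots,B_t;C_1,\dots,C_t)$;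 (e) if $A$ is not complete to $B$, then $t=3$ and $Q$ is a 5-basket with 5-basket partition $(A;B_1,B_2,B_3;C_1,C_2,C_3;\emptyset)$.
   Context: Graphs are finite, simple, nonnull; $d_Q(v)$ is the degree and $N_Q(v)$ the neighbourhood of $v$ in $Q$. A graph is $(H_1,\dots,H_m)$-free if it has no induced subgraph isomorphic to any $H_i$. $P_k$, $C_k$ are the path and cycle on $k$ vertices; $2P_3$ is two disjoint copies of $P_3$. $T_0$ is the graph with vertices $p,q,u_0,u_1,u_2,u_3,w_1,w_2,w_3$ and edges $pq,pu_0,pu_2,pu_3,qu_1,qu_2,qu_3,u_0w_1,u_1w_1,u_2w_2,u_3w_3,w_1w_2,w_1w_3,w_2w_3$. For $s\ge3$ the $s$-pentagon is the graph on vertices $a,b_1,\dots,b_s,c_1,\dots,c_s$ where $a$ is adjacent to every $b_i$ and no $c_i$, $\{b_i\}$ is stable, $\{c_i\}$ is a clique, and $b_ic_j$ is an edge iff $i=j$. For disjoint vertex sets $X,Y$, $X$ is complete (anticomplete) to $Y$ if every vertex of $X$ is adjacent (nonadjacent) to every vertex of $Y$. $t$-frame ($t\ge3$): a graph $Q$ whose vertex set partitions into nonempty sets $A,B_1,\dots,B_t,C_1,\dots,C_t$ (no condition on adjacency inside a set) such that every vertex of $A$ has a neighbour in at least two of $B_1,\dots,B_t$; $A$ is anticomplete to $C_1\cup\dots\cup C_t$; the $B_i$ are pairwise anticomplete; the $C_i$ are pairwise complete; $B_i$ is anticomplete to $C_j$ for $i\ne j$; and for each $i$, every vertex of $B_i$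 has a neighbour in $A$ and a neighbour in $C_i$, and every vertex of $C_i$ has a neighbour in $B_i$. This is a $t$-frame partition $(A;B_1,\dots,B_t;C_1,\dots,C_t)$. $t$-villa with $t$-villa partition $(A;B_1,\dots,B_t;C_1,\dots,C_t)$: $A,B_i,C_i$ are nonempty cliques partitioning the vertex set, $A$ is complete to $B_1\cup\dots\cup B_t$ and anticomplete to $C_1\cup\dots\cup C_t$; the $B_i$ pairwise anticomplete; the $C_i$ pairwise complete; $B_i$ anticomplete to $C_j$ for $i\ne j$; each $B_i$ can be ordered $\beta_1,\dots,\beta_{r}$ with $\emptyset\ne N(\beta_r)\cap C_i\subseteq\dots\subseteq N(\beta_1)\cap C_i=C_i$. 5-basket with 5-basket partition $(A;B_1,B_2,B_3;C_1,C_2,C_3;F)$: the sets partition the vertex set; $A,B_i,C_i$ are nonempty cliques, $F$ a possibly empty clique; $B_1,B_2,B_3$ pairwise anticomplete; $C_1,C_2,C_3$ pairwise complete; there is $i^*$ such that $A$ is complete to $(B_1\cup B_2\cup B_3)\setminus B_{i^*}$ and $A$ can be ordered $\alpha_1,\dots,\alpha_m$ with $N(\alpha_m)\cap B_{i^*}\subseteq\dots\subseteq N(\alpha_1)\cap B_{i^*}=B_{i^*}$; $A$ anticomplete to $C_1\cup C_2\cup C_3$; each $B_i$ complete to $C_i$ and anticomplete to $C_j$ ($j\ne i$); and there is $j^*$ such that $F$ is complete to $V\setminus(B_{j^*}\cup C_{j^*}\cup F)$ and anticomplete to $B_{j^*}\cup C_{j^*}$. *)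

theory Defs
  imports Main
begin

definition graph :: "'a set \<Rightarrow> ('a \<Rightarrow> 'a \<Rightarrow> bool) \<Rightarrow> bool" where
  "graph V E \<longleftrightarrow> finite V \<and> V \<noteq> {} \<and>
     (\<forall>x y. E x y \<longrightarrow> x \<in> V \<and> y \<in> V) \<and>
     (\<forall>x y. E x y \<longrightarrow> E y x) \<and> (\<forall>x. \<not> E x x)"

definition nbhd :: "'a set \<Rightarrow> ('a \<Rightarrow> 'a \<Rightarrow> bool) \<Rightarrow> 'a \<Rightarrow> 'a set" where
  "nbhd V E v = {u \<in> V. E v u}"

definition deg :: "'a set \<Rightarrow> ('a \<Rightarrow> 'a \<Rightarrow> bool) \<Rightarrow> 'a \<Rightarrow> nat" where
  "deg V E v = card (nbhd V E v)"

definition clique :: "('a \<Rightarrow> 'a \<Rightarrow> bool) \<Rightarrow> 'a set \<Rightarrow> bool" where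
  "clique E X \<longleftrightarrow> (\<forall>x\<in>X. \<forall>y\<in>X. x \<noteq> y \<longrightarrow> E x y)"

definition complete_to :: "('a \<Rightarrow> 'a \<Rightarrow> bool) \<Rightarrow> 'a set \<Rightarrow> 'a set \<Rightarrow> bool" where
  "complete_to E X Y \<longleftrightarrow> (\<forall>x\<in>X. \<forall>y\<in>Y. E x y)"

definition anticomplete_to :: "('a \<Rightarrow> 'a \<Rightarrow> bool) \<Rightarrow> 'a set \<Rightarrow> 'a set \<Rightarrow> bool" where
  "anticomplete_to E X Y \<longleftrightarrow> (\<forall>x\<in>X. \<forall>y\<in>Y. \<not> E x y)"

definition induced_sub :: "'b set \<Rightarrow> ('b \<Rightarrow> 'b \<Rightarrow> bool) \<Rightarrow> 'a set \<Rightarrow> ('a \<Rightarrow> 'a \<Rightarrow> bool) \<Rightarrow> bool" where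
  "induced_sub VH EH V E \<longleftrightarrow> (\<exists>f. inj_on f VH \<and> f ` VH \<subseteq> V \<and>
      (\<forall>x\<in>VH. \<forall>y\<in>VH. EH x y \<longleftrightarrow> E (f x) (f y)))"

definition free_of :: "'b set \<Rightarrow> ('b \<Rightarrow> 'b \<Rightarrow> bool) \<Rightarrow> 'a set \<Rightarrow> ('a \<Rightarrow> 'a \<Rightarrow> bool) \<Rightarrow> bool" where
  "free_of VH EH V E \<longleftrightarrow> \<not> induced_sub VH EH V E"

definition symrel :: "(nat \<times> nat) set \<Rightarrow> nat \<Rightarrow> nat \<Rightarrow> bool" where
  "symrel S x y \<longleftrightarrow> (x, y) \<in> S \<or> (y, x) \<in> S"

definition twoP3_V :: "nat set" where "twoP3_V = {0..5}"
definition twoP3_E :: "nat \<Rightarrow> nat \<Rightarrow> bool" where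
  "twoP3_E = symrel {(0,1),(1,2),(3,4),(4,5)}"

definition cyc_V :: "nat \<Rightarrow> nat set" where "cyc_V k = {0..<k}"
definition cyc_E :: "nat \<Rightarrow> nat \<Rightarrow> nat \<Rightarrow> bool" where
  "cyc_E k x y \<longleftrightarrow> x < k \<and> y < k \<and> (y = (x + 1) mod k \<or> x = (y + 1) mod k)"

text \<open>T0: p=0,q=1,u0=2,u1=3,u2=4,u3=5,w1=6,w2=7,w3=8.\<close>
definition T0_V :: "nat set" where "T0_V = {0..8}"
definition T0_E :: "nat \<Rightarrow> nat \<Rightarrow> bool" where
  "T0_E = symrel {(0,1),(0,2),(0,4),(0,5),(1,3),(1,4),(1,5),(2,6),(3,6),(4,7),(5,8),
                  (6,7),(6,8),(7,8)}"

text \<open>s-pentagon: a=0, b_i=i (1\<le>i\<le>s), c_i=s+i.\<close>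
definition pent_V :: "nat \<Rightarrow> nat set" where "pent_V s = {0..2*s}"
definition pent_E :: "nat \<Rightarrow> nat \<Rightarrow> nat \<Rightarrow> bool" where
  "pent_E s = symrel ({(0, i) | i. 1 \<le> i \<and> i \<le> s}
                    \<union> {(i, s + i) | i. 1 \<le> i \<and> i \<le> s}
                    \<union> {(s + i, s + j) | i j. 1 \<le> i \<and> i \<le> s \<and> 1 \<le> j \<and> j \<le> s \<and> i \<noteq> j})"

definition is_partition3 :: "'a set \<Rightarrow> nat \<Rightarrow> 'a set \<Rightarrow> (nat \<Rightarrow> 'a set) \<Rightarrow> (nat \<Rightarrow> 'a set) \<Rightarrow> bool" where
  "is_partition3 V t A B C \<longleftrightarrow>
     A \<union> (\<Union>i\<in>{1..t}. B i) \<union> (\<Union>i\<in>{1..t}. C i) = V \<and>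
     (\<forall>i\<in>{1..t}. A \<inter> B i = {} \<and> A \<inter> C i = {}) \<and>
     (\<forall>i\<in>{1..t}. \<forall>j\<in>{1..t}. B i \<inter> C j = {}) \<and>
     (\<forall>i\<in>{1..t}. \<forall>j\<in>{1..t}. i \<noteq> j \<longrightarrow> B i \<inter> B j = {} \<and> C i \<inter> C j = {})"

definition frame_partition :: "'a set \<Rightarrow> ('a \<Rightarrow> 'a \<Rightarrow> bool) \<Rightarrow> nat \<Rightarrow> 'a set \<Rightarrow> (nat \<Rightarrow> 'a set) \<Rightarrow> (nat \<Rightarrow> 'a set) \<Rightarrow> bool" where
  "frame_partition V E t A B C \<longleftrightarrow>
     t \<ge> 3 \<and> is_partition3 V t A B C \<and>
     A \<noteq> {} \<and> (\<forall>i\<in>{1..t}. B i \<noteq> {} \<and> C i \<noteq> {}) \<and>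
     (\<forall>a\<in>A. \<exists>i\<in>{1..t}. \<exists>j\<in>{1..t}. i \<noteq> j \<and> (\<exists>b\<in>B i. E a b) \<and> (\<exists>b\<in>B j. E a b)) \<and>
     (\<forall>i\<in>{1..t}. anticomplete_to E A (C i)) \<and>
     (\<forall>i\<in>{1..t}. \<forall>j\<in>{1..t}. i \<noteq> j \<longrightarrow> anticomplete_to E (B i) (B j)) \<and>
     (\<forall>i\<in>{1..t}. \<forall>j\<in>{1..t}. i \<noteq> j \<longrightarrow> complete_to E (C i) (C j)) \<and>
     (\<forall>i\<in>{1..t}. \<forall>j\<in>{1..t}. i \<noteq> j \<longrightarrow> anticomplete_to E (B i) (C j)) \<and>
     (\<forall>i\<in>{1..t}. \<forall>b\<in>B i. (\<exists>a\<in>A. E b a) \<and> (\<exists>c\<in>C i. E b c)) \<and>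
     (\<forall>i\<in>{1..t}. \<forall>c\<in>C i. \<exists>b\<in>B i. E c b)"

definition villa_partition :: "'a set \<Rightarrow> ('a \<Rightarrow> 'a \<Rightarrow> bool) \<Rightarrow> nat \<Rightarrow> 'a set \<Rightarrow> (nat \<Rightarrow> 'a set) \<Rightarrow> (nat \<Rightarrow> 'a set) \<Rightarrow> bool" where
  "villa_partition V E t A B C \<longleftrightarrow>
     is_partition3 V t A B C \<and>
     A \<noteq> {} \<and> clique E A \<and> (\<forall>i\<in>{1..t}. B i \<noteq> {} \<and> C i \<noteq> {} \<and> clique E (B i) \<and> clique E (C i)) \<and>
     complete_to E A (\<Union>i\<in>{1..t}. B i) \<and> anticomplete_to E A (\<Union>i\<in>{1..t}. C i) \<and>
     (\<forall>i\<in>{1..t}. \<forall>j\<in>{1..t}. i \<noteq> j \<longrightarrow> anticomplete_to E (B i) (B j)) \<and>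
     (\<forall>i\<in>{1..t}. \<forall>j\<in>{1..t}. i \<noteq> j \<longrightarrow> complete_to E (C i) (C j)) \<and>
     (\<forall>i\<in>{1..t}. \<forall>j\<in>{1..t}. i \<noteq> j \<longrightarrow> anticomplete_to E (B i) (C j)) \<and>
     (\<forall>i\<in>{1..t}. \<exists>\<beta>. bij_betw \<beta> {1..card (B i)} (B i) \<and>
        nbhd V E (\<beta> (card (B i))) \<inter> C i \<noteq> {} \<and>
        (\<forall>k. 1 \<le> k \<and> k < card (B i) \<longrightarrow> nbhd V E (\<beta> (Suc k)) \<inter> C i \<subseteq> nbhd V E (\<beta> k) \<inter> C i) \<and>
        nbhd V E (\<beta> 1) \<inter> C i = C i)"

definition basket_partition :: "'a set \<Rightarrow> ('a \<Rightarrow> 'a \<Rightarrow> bool) \<Rightarrow> 'a set \<Rightarrow> (nat \<Rightarrow> 'a set) \<Rightarrow> (nat \<Rightarrow> 'a set) \<Rightarrow> 'a set \<Rightarrow> bool" where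
  "basket_partition V E A B C F \<longleftrightarrow>
     A \<union> (\<Union>i\<in>{1..3}. B i) \<union> (\<Union>i\<in>{1..3}. C i) \<union> F = V \<and>
     (\<forall>i\<in>{1..3::nat}. A \<inter> B i = {} \<and> A \<inter> C i = {} \<and> F \<inter> B i = {} \<and> F \<inter> C i = {}) \<and> A \<inter> F = {} \<and>
     (\<forall>i\<in>{1..3::nat}. \<forall>j\<in>{1..3}. B i \<inter> C j = {}) \<and>
     (\<forall>i\<in>{1..3::nat}. \<forall>j\<in>{1..3}. i \<noteq> j \<longrightarrow> B i \<inter> B j = {} \<and> C i \<inter> C j = {}) \<and>
     A \<noteq> {} \<and> clique E A \<and> (\<forall>i\<in>{1..3::nat}. B i \<noteq> {} \<and> C i \<noteq> {} \<and> clique E (B i) \<and> clique E (C i)) \<and>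
     clique E F \<and>
     (\<forall>i\<in>{1..3::nat}. \<forall>j\<in>{1..3}. i \<noteq> j \<longrightarrow> anticomplete_to E (B i) (B j)) \<and>
     (\<forall>i\<in>{1..3::nat}. \<forall>j\<in>{1..3}. i \<noteq> j \<longrightarrow> complete_to E (C i) (C j)) \<and>
     (\<exists>i0\<in>{1..3::nat}. complete_to E A ((\<Union>i\<in>{1..3}. B i) - B i0) \<and>
        (\<exists>\<alpha>. bij_betw \<alpha> {1..card A} A \<and>
          (\<forall>k. 1 \<le> k \<and> k < card A \<longrightarrow> nbhd V E (\<alpha> (Suc k)) \<inter> B i0 \<subseteq> nbhd V E (\<alpha> k) \<inter> B i0) \<and>
          nbhd V E (\<alpha> 1) \<inter> B i0 = B i0)) \<and>
     anticomplete_to E A (\<Union>i\<in>{1..3}. C i) \<and>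
     (\<forall>i\<in>{1..3::nat}. complete_to E (B i) (C i)) \<and>
     (\<forall>i\<in>{1..3::nat}. \<forall>j\<in>{1..3}. i \<noteq> j \<longrightarrow> anticomplete_to E (B i) (C j)) \<and>
     (\<exists>j0\<in>{1..3::nat}. complete_to E F (V - (B j0 \<union> C j0 \<union> F)) \<and>
        anticomplete_to E F (B j0 \<union> C j0))"

end

theory Submission
  imports Defs
begin

text \<open>All adjacencies of a \<open>t\<close>-frame are fixed except those between \<open>A\<close> and \<open>B\<close> and inside the
  classes, and each unknown one is settled by picking a few witnesses from the frame axioms: the
  wrong choice induces \<open>2P\<^sub>3\<close>, \<open>C\<^sub>4\<close>, \<open>C\<^sub>6\<close>, \<open>C\<^sub>7\<close> or \<open>T\<^sub>0\<close>.  In this way each \<open>C i\<close>, each \<open>B i\<close>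
  and \<open>A\<close> turn out to be cliques; for \<open>B i\<close> the one configuration escaping these graphs, a
  vertex of \<open>A\<close> seeing two nonadjacent vertices of \<open>B i\<close> with private neighbours in \<open>C i\<close>,
  extends to a \<open>(t + 1)\<close>-pentagon.  Given the cliques, \<open>C\<^sub>4\<close> and \<open>C\<^sub>6\<close> make the neighbourhoods of
  \<open>A\<close> in \<open>B\<close>, of \<open>B i\<close> in \<open>C i\<close> and of \<open>C i\<close> in \<open>B i\<close> chains under inclusion; as degrees differ
  only by the sizes of these neighbourhoods, listing by degree lists them in decreasing order.
  Finally, the non-neighbours in \<open>B\<close> of vertices of \<open>A\<close> lie in a single class; a fourth class
  would give a \<open>2P\<^sub>3\<close>, so \<open>t = 3\<close>, and then each \<open>B i\<close> is complete to \<open>C i\<close>.\<close>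

lemma induced_sub_of_list:
  assumes "set xs \<subseteq> V" "distinct xs" "VH = {0..<length xs}"
    and "\<And>i j. i < length xs \<Longrightarrow> j < length xs \<Longrightarrow> EH i j \<longleftrightarrow> E (xs ! i) (xs ! j)"
  shows "induced_sub VH EH V E"
  unfolding induced_sub_def
proof (intro exI conjI)
  show "inj_on (nth xs) VH" using assms(2,3) by (auto intro!: inj_on_nth)
  show "nth xs ` VH \<subseteq> V" using assms(1,3) nth_mem by fastforce
qed (use assms(3,4) in auto)

lemma pent_E_iff:
  assumes "x \<le> 2 * s" "y \<le> 2 * s"
  shows "pent_E s x y \<longleftrightarrow>
    (x = 0 \<and> 1 \<le> y \<and> y \<le> s) \<or> (y = 0 \<and> 1 \<le> x \<and> x \<le> s) \<or>
    (1 \<le> x \<and> x \<le> s \<and> y = s + x) \<or> (1 \<le> y \<and> y \<le> s \<and> x = s + y) \<or>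
    (s < x \<and> s < y \<and> x \<noteq> y)"
proof -
  have clique_part: "(u, v) \<in> {(s + i, s + j) | i j. 1 \<le> i \<and> i \<le> s \<and> 1 \<le> j \<and> j \<le> s \<and> i \<noteq> j}
      \<longleftrightarrow> s < u \<and> s < v \<and> u \<noteq> v" if "u \<le> 2 * s" "v \<le> 2 * s" for u v
  proof
    assume "s < u \<and> s < v \<and> u \<noteq> v"
    then have "u = s + (u - s) \<and> v = s + (v - s) \<and> 1 \<le> u - s \<and> u - s \<le> s \<and>
        1 \<le> v - s \<and> v - s \<le> s \<and> u - s \<noteq> v - s"
      using that by auto
    then show "(u, v) \<in> {(s + i, s + j) | i j. 1 \<le> i \<and> i \<le> s \<and> 1 \<le> j \<and> j \<le> s \<and> i \<noteq> j}"
      by blast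
  qed auto
  show ?thesis
    unfolding pent_E_def symrel_def Un_iff clique_part[OF assms] clique_part[OF assms(2,1)] by auto
qed

lemma pentagon_no_false_twins:
  assumes s: "2 \<le> s" and xy: "x \<in> pent_V s" "y \<in> pent_V s" "x \<noteq> y" "\<not> pent_E s x y"
  shows "\<exists>z\<in>pent_V s. pent_E s x z \<noteq> pent_E s y z"
proof -
  have separated: "\<exists>z\<in>pent_V s. pent_E s u z \<noteq> pent_E s v z"
    if uv: "u < v" "v \<le> 2 * s" "\<not> pent_E s u v" for u v
  proof -
    consider "u = 0" "v \<le> s" | "u = 0" "s < v" | "1 \<le> u" "v \<le> s" | "1 \<le> u" "u \<le> s" "s < v" | "s < u"
      by linarith
    then show ?thesis
    proof cases
      case 1
      then show ?thesis using uv by (intro bexI[of _ "s + v"]) (simp_all add: pent_E_iff pent_V_def)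
    next
      case 2
      define i :: nat where "i = (if v - s = 1 then 2 else 1)"
      have "i \<in> {1..2}" "i \<noteq> v - s" unfolding i_def by auto
      then show ?thesis using 2 uv s by (intro bexI[of _ "s + i"]) (simp_all add: pent_E_iff pent_V_def)
    next
      case 3
      then show ?thesis using uv by (intro bexI[of _ "s + u"]) (simp_all add: pent_E_iff pent_V_def)
    next
      case 4
      then show ?thesis using uv by (intro bexI[of _ 0]) (simp_all add: pent_E_iff pent_V_def)
    next
      case 5
      then show ?thesis using uv by (simp add: pent_E_iff)
    qed
  qed
  have sym: "pent_E s x y \<longleftrightarrow> pent_E s y x" for x y
    unfolding pent_E_def symrel_def by blast
  have "x \<le> 2 * s" "y \<le> 2 * s" using xy unfolding pent_V_def by auto
  then show ?thesis
    using separated[of x y] separated[of y x] xy(3,4) sym by (cases "x < y") (auto simp: not_less)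
qed

lemma induced_pentagon:
  assumes graph: "graph V E" and s: "2 \<le> s" and a: "a \<in> V"
    and in_V: "\<And>k. k \<in> {1..s} \<Longrightarrow> \<beta> k \<in> V \<and> \<gamma> k \<in> V"
    and a_adj: "\<And>k. k \<in> {1..s} \<Longrightarrow> E a (\<beta> k) \<and> \<not> E a (\<gamma> k)"
    and \<beta>\<beta>: "\<And>k l. k \<in> {1..s} \<Longrightarrow> l \<in> {1..s} \<Longrightarrow> \<not> E (\<beta> k) (\<beta> l)"
    and \<beta>\<gamma>: "\<And>k l. k \<in> {1..s} \<Longrightarrow> l \<in> {1..s} \<Longrightarrow> E (\<beta> k) (\<gamma> l) \<longleftrightarrow> k = l"
    and \<gamma>\<gamma>: "\<And>k l. k \<in> {1..s} \<Longrightarrow> l \<in> {1..s} \<Longrightarrow> k \<noteq> l \<Longrightarrow> E (\<gamma> k) (\<gamma> l)"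
  shows "induced_sub (pent_V s) (pent_E s) V E"
proof -
  have sym: "E x y \<longleftrightarrow> E y x" and irrefl: "\<not> E x x" for x y
    using graph unfolding graph_def by blast+
  define f where "f x = (if x = 0 then a else if x \<le> s then \<beta> x else \<gamma> (x - s))" for x
  have regions: "x = 0 \<or> x \<in> {1..s} \<or> (x - s \<in> {1..s} \<and> x = s + (x - s))" if "x \<in> pent_V s" for x
    using that unfolding pent_V_def by auto
  have a_adj': "E (\<beta> k) a" "\<not> E (\<gamma> k) a" if "k \<in> {1..s}" for k
    using a_adj[OF that] sym by blast+
  have adj: "E (f x) (f y) \<longleftrightarrow> pent_E s x y" if "x \<in> pent_V s" "y \<in> pent_V s" for x y
  proof -
    have le: "x \<le> 2 * s" "y \<le> 2 * s" using that unfolding pent_V_def by auto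
    from regions[OF that(1)] regions[OF that(2)] show ?thesis
      unfolding pent_E_iff[OF le] f_def
      by (elim disjE conjE) (auto simp: irrefl a_adj a_adj' \<beta>\<beta> \<beta>\<gamma> \<gamma>\<gamma> sym[of "\<gamma> _" "\<beta> _"])
  qed
  show ?thesis
    unfolding induced_sub_def
  proof (intro exI conjI)
    show "inj_on f (pent_V s)"
    proof (rule inj_onI, rule ccontr)
      fix x y assume xy: "x \<in> pent_V s" "y \<in> pent_V s" "f x = f y" "x \<noteq> y"
      then have twins: "pent_E s x z \<longleftrightarrow> pent_E s y z" if "z \<in> pent_V s" for z
        using adj that by metis
      have "\<not> pent_E s x y" using adj[OF xy(1,2)] xy(3) irrefl by simp
      then show False
        using pentagon_no_false_twins[OF s xy(1,2,4)] twins by blast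
    qed
    show "f ` pent_V s \<subseteq> V"
      using regions a in_V unfolding f_def by fastforce
  qed (use adj in simp)
qed

lemma decreasing_if_sorted_by_card:
  assumes f: "bij_betw f {1..n} S"
    and sorted: "\<forall>k. 1 \<le> k \<and> k < n \<longrightarrow> d (f (Suc k)) \<le> d (f k)"
    and d: "\<And>x. x \<in> S \<Longrightarrow> d x = K + card (N x)"
    and fin: "\<And>x. x \<in> S \<Longrightarrow> finite (N x)"
    and nested: "\<And>x y. x \<in> S \<Longrightarrow> y \<in> S \<Longrightarrow> N x \<subseteq> N y \<or> N y \<subseteq> N x"
  shows "\<forall>k. 1 \<le> k \<and> k < n \<longrightarrow> N (f (Suc k)) \<subseteq> N (f k)"
proof (intro allI impI)
  fix k assume k: "1 \<le> k \<and> k < n"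
  then have S: "f k \<in> S" "f (Suc k) \<in> S" using bij_betw_apply[OF f] by auto
  have "d (f (Suc k)) \<le> d (f k)" using sorted k by blast
  then have "card (N (f (Suc k))) \<le> card (N (f k))" using d[OF S(1)] d[OF S(2)] by simp
  then show "N (f (Suc k)) \<subseteq> N (f k)"
    using nested[OF S] card_seteq[OF fin[OF S(2)]] by blast
qed

lemma first_of_decreasing_is_largest:
  assumes f: "bij_betw f {1..n} S" and dec: "\<forall>k. 1 \<le> k \<and> k < n \<longrightarrow> N (f (Suc k)) \<subseteq> N (f k)"
    and x: "x \<in> S"
  shows "N x \<subseteq> N (f 1)"
proof -
  obtain j where j: "j \<in> {1..n}" "f j = x" using f x unfolding bij_betw_def by auto
  have "N (f k) \<subseteq> N (f 1)" if "1 \<le> k" "k \<le> n" for k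
    using that
  proof (induction k rule: dec_induct)
    case (step k)
    then show ?case using dec by fastforce
  qed simp
  then show ?thesis using j by auto
qed

section \<open>Frames\<close>

locale t_frame =
  fixes V :: "'a set" and E :: "'a \<Rightarrow> 'a \<Rightarrow> bool" and t :: nat
    and A :: "'a set" and B C :: "nat \<Rightarrow> 'a set"
  assumes graph: "graph V E"
    and free_2P3: "free_of twoP3_V twoP3_E V E"
    and free_C4: "free_of (cyc_V 4) (cyc_E 4) V E"
    and free_C6: "free_of (cyc_V 6) (cyc_E 6) V E"
    and free_C7: "free_of (cyc_V 7) (cyc_E 7) V E"
    and free_T0: "free_of T0_V T0_E V E"
    and free_pentagon: "free_of (pent_V (t + 1)) (pent_E (t + 1)) V E"
    and frame: "frame_partition V E t A B C"
begin

abbreviation Bs where "Bs \<equiv> \<Union>i\<in>{1..t}. B i"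
abbreviation Cs where "Cs \<equiv> \<Union>i\<in>{1..t}. C i"

lemma E_sym: "E x y \<longleftrightarrow> E y x"
  using graph unfolding graph_def by blast

lemma E_irrefl [simp]: "\<not> E x x"
  using graph unfolding graph_def by blast

lemma E_in_V: "E x y \<Longrightarrow> x \<in> V \<and> y \<in> V"
  using graph unfolding graph_def by blast

text \<open>Distinctness is only assumed for the pairs of false twins of the forbidden graph; all other
  pairs are separated by their adjacencies.\<close>

lemma no_induced_C4:
  assumes "E x0 x1" "E x1 x2" "E x2 x3" "E x3 x0" "\<not> E x0 x2" "\<not> E x1 x3" "x0 \<noteq> x2" "x1 \<noteq> x3"
  shows False
proof -
  have "induced_sub (cyc_V 4) (cyc_E 4) V E"
  proof (rule induced_sub_of_list[of "[x0, x1, x2, x3]"])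
    fix i j :: nat assume "i < length [x0, x1, x2, x3]" "j < length [x0, x1, x2, x3]"
    then have "i = 0 \<or> i = 1 \<or> i = 2 \<or> i = 3" "j = 0 \<or> j = 1 \<or> j = 2 \<or> j = 3" by auto
    then show "cyc_E 4 i j \<longleftrightarrow> E ([x0, x1, x2, x3] ! i) ([x0, x1, x2, x3] ! j)"
      using assms by (elim disjE) (simp_all add: cyc_E_def E_sym)
  qed (use assms E_in_V in \<open>auto simp: cyc_V_def E_sym\<close>)
  then show False using free_C4 unfolding free_of_def by blast
qed

lemma no_induced_2P3:
  assumes "E x0 x1" "E x1 x2" "E y0 y1" "E y1 y2" "\<not> E x0 x2" "\<not> E y0 y2"
    and "\<not> E x0 y0" "\<not> E x0 y1" "\<not> E x0 y2" "\<not> E x1 y0" "\<not> E x1 y1" "\<not> E x1 y2"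
      "\<not> E x2 y0" "\<not> E x2 y1" "\<not> E x2 y2"
    and "x0 \<noteq> x2" "y0 \<noteq> y2"
  shows False
proof -
  have "induced_sub twoP3_V twoP3_E V E"
  proof (rule induced_sub_of_list[of "[x0, x1, x2, y0, y1, y2]"])
    fix i j :: nat assume "i < length [x0, x1, x2, y0, y1, y2]" "j < length [x0, x1, x2, y0, y1, y2]"
    then have "i = 0 \<or> i = 1 \<or> i = 2 \<or> i = 3 \<or> i = 4 \<or> i = 5"
      "j = 0 \<or> j = 1 \<or> j = 2 \<or> j = 3 \<or> j = 4 \<or> j = 5" by auto
    then show "twoP3_E i j \<longleftrightarrow> E ([x0, x1, x2, y0, y1, y2] ! i) ([x0, x1, x2, y0, y1, y2] ! j)"
      using assms by (elim disjE) (simp_all add: twoP3_E_def symrel_def E_sym)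
  qed (use assms E_in_V in \<open>auto simp: twoP3_V_def E_sym\<close>)
  then show False using free_2P3 unfolding free_of_def by blast
qed

lemma no_induced_C6:
  assumes "E x0 x1" "E x1 x2" "E x2 x3" "E x3 x4" "E x4 x5" "E x5 x0"
    and "\<not> E x0 x2" "\<not> E x0 x3" "\<not> E x0 x4" "\<not> E x1 x3" "\<not> E x1 x4" "\<not> E x1 x5"
      "\<not> E x2 x4" "\<not> E x2 x5" "\<not> E x3 x5"
  shows False
proof -
  have "induced_sub (cyc_V 6) (cyc_E 6) V E"
  proof (rule induced_sub_of_list[of "[x0, x1, x2, x3, x4, x5]"])
    fix i j :: nat assume "i < length [x0, x1, x2, x3, x4, x5]" "j < length [x0, x1, x2, x3, x4, x5]"
    then have "i = 0 \<or> i = 1 \<or> i = 2 \<or> i = 3 \<or> i = 4 \<or> i = 5"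
      "j = 0 \<or> j = 1 \<or> j = 2 \<or> j = 3 \<or> j = 4 \<or> j = 5" by auto
    then show "cyc_E 6 i j \<longleftrightarrow> E ([x0, x1, x2, x3, x4, x5] ! i) ([x0, x1, x2, x3, x4, x5] ! j)"
      using assms by (elim disjE) (simp_all add: cyc_E_def E_sym)
  qed (use assms E_in_V in \<open>auto simp: cyc_V_def E_sym\<close>)
  then show False using free_C6 unfolding free_of_def by blast
qed

lemma no_induced_C7:
  assumes "E x0 x1" "E x1 x2" "E x2 x3" "E x3 x4" "E x4 x5" "E x5 x6" "E x6 x0"
    and "\<not> E x0 x2" "\<not> E x0 x3" "\<not> E x0 x4" "\<not> E x0 x5" "\<not> E x1 x3" "\<not> E x1 x4"
      "\<not> E x1 x5" "\<not> E x1 x6" "\<not> E x2 x4" "\<not> E x2 x5" "\<not> E x2 x6" "\<not> E x3 x5"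
      "\<not> E x3 x6" "\<not> E x4 x6"
  shows False
proof -
  have "induced_sub (cyc_V 7) (cyc_E 7) V E"
  proof (rule induced_sub_of_list[of "[x0, x1, x2, x3, x4, x5, x6]"])
    fix i j :: nat assume "i < length [x0, x1, x2, x3, x4, x5, x6]" "j < length [x0, x1, x2, x3, x4, x5, x6]"
    then have "i = 0 \<or> i = 1 \<or> i = 2 \<or> i = 3 \<or> i = 4 \<or> i = 5 \<or> i = 6"
      "j = 0 \<or> j = 1 \<or> j = 2 \<or> j = 3 \<or> j = 4 \<or> j = 5 \<or> j = 6" by auto
    then show "cyc_E 7 i j \<longleftrightarrow> E ([x0, x1, x2, x3, x4, x5, x6] ! i) ([x0, x1, x2, x3, x4, x5, x6] ! j)"
      using assms by (elim disjE) (simp_all add: cyc_E_def E_sym)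
  qed (use assms E_in_V in \<open>auto simp: cyc_V_def E_sym\<close>)
  then show False using free_C7 unfolding free_of_def by blast
qed

lemma no_induced_T0:
  assumes "E p q" "E p u0" "E q u1" "E p u2" "E p u3" "E q u2" "E q u3"
      "E u0 w1" "E u1 w1" "E u2 w2" "E u3 w3" "E w1 w2" "E w1 w3" "E w2 w3"
    and "\<not> E p u1" "\<not> E p w1" "\<not> E p w2" "\<not> E p w3" "\<not> E q u0" "\<not> E q w1" "\<not> E q w2"
      "\<not> E q w3" "\<not> E u0 u1" "\<not> E u0 u2" "\<not> E u0 u3" "\<not> E u0 w2" "\<not> E u0 w3"
      "\<not> E u1 u2" "\<not> E u1 u3" "\<not> E u1 w2" "\<not> E u1 w3" "\<not> E u2 u3" "\<not> E u2 w1"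
      "\<not> E u2 w3" "\<not> E u3 w1" "\<not> E u3 w2"
  shows False
proof -
  have "induced_sub T0_V T0_E V E"
  proof (rule induced_sub_of_list[of "[p, q, u0, u1, u2, u3, w1, w2, w3]"])
    fix i j :: nat
    assume "i < length [p, q, u0, u1, u2, u3, w1, w2, w3]" "j < length [p, q, u0, u1, u2, u3, w1, w2, w3]"
    then have "i = 0 \<or> i = 1 \<or> i = 2 \<or> i = 3 \<or> i = 4 \<or> i = 5 \<or> i = 6 \<or> i = 7 \<or> i = 8"
      "j = 0 \<or> j = 1 \<or> j = 2 \<or> j = 3 \<or> j = 4 \<or> j = 5 \<or> j = 6 \<or> j = 7 \<or> j = 8" by auto
    then show "T0_E i j \<longleftrightarrow>
        E ([p, q, u0, u1, u2, u3, w1, w2, w3] ! i) ([p, q, u0, u1, u2, u3, w1, w2, w3] ! j)"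
      using assms by (elim disjE) (simp_all add: T0_E_def symrel_def E_sym)
  qed (use assms E_in_V in \<open>auto simp: T0_V_def E_sym\<close>)
  then show False using free_T0 unfolding free_of_def by blast
qed

lemma t_ge_3: "3 \<le> t"
  and partition: "is_partition3 V t A B C"
  and A_nonempty: "A \<noteq> {}"
  and B_nonempty: "i \<in> {1..t} \<Longrightarrow> B i \<noteq> {}"
  and C_nonempty: "i \<in> {1..t} \<Longrightarrow> C i \<noteq> {}"
  and A_nbrs_two_classes: "a \<in> A \<Longrightarrow> \<exists>i\<in>{1..t}. \<exists>j\<in>{1..t}. i \<noteq> j \<and> (\<exists>b\<in>B i. E a b) \<and> (\<exists>b\<in>B j. E a b)"
  and A_C_anticomplete: "i \<in> {1..t} \<Longrightarrow> anticomplete_to E A (C i)"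
  and B_B_anticomplete: "i \<in> {1..t} \<Longrightarrow> j \<in> {1..t} \<Longrightarrow> i \<noteq> j \<Longrightarrow> anticomplete_to E (B i) (B j)"
  and C_C_complete: "i \<in> {1..t} \<Longrightarrow> j \<in> {1..t} \<Longrightarrow> i \<noteq> j \<Longrightarrow> complete_to E (C i) (C j)"
  and B_C_anticomplete: "i \<in> {1..t} \<Longrightarrow> j \<in> {1..t} \<Longrightarrow> i \<noteq> j \<Longrightarrow> anticomplete_to E (B i) (C j)"
  and B_nbrs: "i \<in> {1..t} \<Longrightarrow> b \<in> B i \<Longrightarrow> (\<exists>a\<in>A. E b a) \<and> (\<exists>c\<in>C i. E b c)"
  and C_nbrs: "i \<in> {1..t} \<Longrightarrow> c \<in> C i \<Longrightarrow> \<exists>b\<in>B i. E c b"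
  using frame by (simp_all add: frame_partition_def)

lemma A_in_V [simp]: "x \<in> A \<Longrightarrow> x \<in> V"
  and B_in_V [simp]: "x \<in> B i \<Longrightarrow> i \<in> {1..t} \<Longrightarrow> x \<in> V"
  and C_in_V [simp]: "x \<in> C i \<Longrightarrow> i \<in> {1..t} \<Longrightarrow> x \<in> V"
  using partition unfolding is_partition3_def by blast+

lemma A_B_neq: "x \<in> A \<Longrightarrow> y \<in> B j \<Longrightarrow> j \<in> {1..t} \<Longrightarrow> x \<noteq> y \<and> y \<noteq> x"
  and A_C_neq: "x \<in> A \<Longrightarrow> y \<in> C j \<Longrightarrow> j \<in> {1..t} \<Longrightarrow> x \<noteq> y \<and> y \<noteq> x"
  and B_C_neq: "x \<in> B i \<Longrightarrow> y \<in> C j \<Longrightarrow> i \<in> {1..t} \<Longrightarrow> j \<in> {1..t} \<Longrightarrow> x \<noteq> y \<and> y \<noteq> x"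
  and B_B_neq: "x \<in> B i \<Longrightarrow> y \<in> B j \<Longrightarrow> i \<in> {1..t} \<Longrightarrow> j \<in> {1..t} \<Longrightarrow> i \<noteq> j \<Longrightarrow> x \<noteq> y"
  and C_C_neq: "x \<in> C i \<Longrightarrow> y \<in> C j \<Longrightarrow> i \<in> {1..t} \<Longrightarrow> j \<in> {1..t} \<Longrightarrow> i \<noteq> j \<Longrightarrow> x \<noteq> y"
  using partition unfolding is_partition3_def by blast+

lemma A_C_nonadj: "x \<in> A \<Longrightarrow> y \<in> C j \<Longrightarrow> j \<in> {1..t} \<Longrightarrow> \<not> E x y \<and> \<not> E y x"
  using A_C_anticomplete[of j] E_sym[of x y] unfolding anticomplete_to_def by simp

lemma B_B_nonadj: "x \<in> B i \<Longrightarrow> y \<in> B j \<Longrightarrow> i \<in> {1..t} \<Longrightarrow> j \<in> {1..t} \<Longrightarrow> i \<noteq> j \<Longrightarrow> \<not> E x y"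
  using B_B_anticomplete[of i j] unfolding anticomplete_to_def by simp

lemma C_C_adj: "x \<in> C i \<Longrightarrow> y \<in> C j \<Longrightarrow> i \<in> {1..t} \<Longrightarrow> j \<in> {1..t} \<Longrightarrow> i \<noteq> j \<Longrightarrow> E x y"
  using C_C_complete[of i j] unfolding complete_to_def by simp

lemma B_C_nonadj: "x \<in> B i \<Longrightarrow> y \<in> C j \<Longrightarrow> i \<in> {1..t} \<Longrightarrow> j \<in> {1..t} \<Longrightarrow> i \<noteq> j \<Longrightarrow> \<not> E x y \<and> \<not> E y x"
  using B_C_anticomplete[of i j] E_sym[of x y] unfolding anticomplete_to_def by simp

text \<open>Used with \<open>simp only\<close>, so that the class indices stay opaque and the premises of these
  conditional rules are found among the assumptions.\<close>
lemmas frame_simps = A_C_nonadj B_B_nonadj C_C_adj B_C_nonadj A_B_neq A_C_neq B_C_neq B_B_neq C_C_neq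
  E_sym eq_commute simp_thms

lemma obtain_A_nbr:
  assumes "i \<in> {1..t}" "b \<in> B i"
  obtains a where "a \<in> A" "E a b"
  using B_nbrs[OF assms] E_sym by blast

lemma obtain_C_nbr:
  assumes "i \<in> {1..t}" "b \<in> B i"
  obtains c where "c \<in> C i" "E b c"
  using B_nbrs[OF assms] by blast

lemma obtain_B_nbr:
  assumes "i \<in> {1..t}" "c \<in> C i"
  obtains b where "b \<in> B i" "E b c"
  using C_nbrs[OF assms] E_sym by blast

lemma obtain_B_C_edge:
  assumes "i \<in> {1..t}"
  obtains b c where "b \<in> B i" "c \<in> C i" "E b c"
  using B_nonempty[OF assms] obtain_C_nbr[OF assms] by blast

lemma obtain_A_nbr_outside:
  assumes "a \<in> A"
  obtains k e where "k \<in> {1..t}" "k \<noteq> i" "e \<in> B k" "E a e"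
  using A_nbrs_two_classes[OF assms] by metis

lemma obtain_third_index:
  assumes "i \<in> {1..t}" "j \<in> {1..t}"
  obtains k where "k \<in> {1..t}" "k \<noteq> i" "k \<noteq> j"
proof -
  have "card {i, j} < card {1..t}" using t_ge_3 by (simp add: card_insert_if)
  then have "\<not> {1..t} \<subseteq> {i, j}" by (meson card_mono finite.emptyI finite_insert not_le)
  then show thesis using that by blast
qed

lemma obtain_fourth_index:
  assumes "4 \<le> t" "i \<in> {1..t}" "j \<in> {1..t}" "k \<in> {1..t}"
  obtains l where "l \<in> {1..t}" "l \<noteq> i" "l \<noteq> j" "l \<noteq> k"
proof -
  have "card {i, j, k} < card {1..t}" using assms(1) by (simp add: card_insert_if)
  then have "\<not> {1..t} \<subseteq> {i, j, k}" by (meson card_mono finite.emptyI finite_insert not_le)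
  then show thesis using that by blast
qed

section \<open>The classes are cliques\<close>

lemma nonadj_C_pair_private_nbrs:
  assumes i: "i \<in> {1..t}" and c: "c \<in> C i" "c' \<in> C i" "c \<noteq> c'" "\<not> E c c'"
    and b: "b \<in> B i" "E b c"
  shows "\<not> E b c'"
proof
  assume "E b c'"
  obtain k where k: "k \<in> {1..t}" "k \<noteq> i" using obtain_third_index[OF i i] by blast
  obtain f where "f \<in> C k" using C_nonempty[OF k(1)] by blast
  with assms k \<open>E b c'\<close> show False by - (rule no_induced_C4[of c b c' f], simp_all only: frame_simps)
qed

lemma C_clique:
  assumes i: "i \<in> {1..t}" and c: "c \<in> C i" "c' \<in> C i" "c \<noteq> c'"
  shows "E c c'"
proof (rule ccontr)
  assume cc': "\<not> E c c'"
  obtain b where b: "b \<in> B i" "E b c" using obtain_B_nbr[OF i c(1)] .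
  obtain b' where b': "b' \<in> B i" "E b' c'" using obtain_B_nbr[OF i c(2)] .
  have bc': "\<not> E b c'" and b'c: "\<not> E b' c"
    using nonadj_C_pair_private_nbrs[OF i c cc' b] nonadj_C_pair_private_nbrs[OF i c(2,1) _ _ b'] c(3) cc' E_sym
    by blast+
  obtain a where a: "a \<in> A" "E a b" using obtain_A_nbr[OF i b(1)] .
  obtain k e where e: "k \<in> {1..t}" "k \<noteq> i" "e \<in> B k" "E a e" using obtain_A_nbr_outside[OF a(1)] .
  obtain f where f: "f \<in> C k" "E e f" using obtain_C_nbr[OF e(1,3)] .
  obtain l where l: "l \<in> {1..t}" "l \<noteq> i" "l \<noteq> k" using obtain_third_index[OF i e(1)] .
  obtain v w where vw: "v \<in> B l" "w \<in> C l" "E v w" using obtain_B_C_edge[OF l(1)] .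
  note G = i c cc' b b' bc' b'c a e f l vw
  show False
  proof (cases "E b b'")
    case True
    have ab': "E a b'"
    proof (rule ccontr)
      assume "\<not> E a b'"
      with G True show False by - (rule no_induced_C6[of c' b' b a e f], simp_all only: frame_simps)
    qed
    have "E a v"
    proof (rule ccontr)
      assume "\<not> E a v"
      with G ab' show False by - (rule no_induced_2P3[of c w v b' a e], simp_all only: frame_simps)
    qed
    with G True ab' show False
      by - (rule no_induced_T0[of f w e v c c' a b b'], simp_all only: frame_simps)
  next
    case False
    have "\<not> E a b'"
    proof
      assume "E a b'"
      with G False show False by - (rule no_induced_C6[of c b a b' c' f], simp_all only: frame_simps)
    qed
    with G False show False by - (rule no_induced_2P3[of b a e b' c' w], simp_all only: frame_simps)
  qed
qed

lemma A_adj_by_nonadj_pair: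
  assumes a: "a \<in> A" and idx: "i \<in> {1..t}" "i' \<in> {1..t}" "l \<in> {1..t}" "m \<in> {1..t}"
    and y: "y \<in> B i" "y' \<in> B i'" "E a y" "E a y'" "\<not> E y y'" "y \<noteq> y'"
    and v: "v \<in> B l" "l \<noteq> i" "l \<noteq> i'"
    and z: "z \<in> C m" "m \<noteq> l" "\<not> E y z" "\<not> E y' z"
  shows "E a v"
proof (rule ccontr)
  assume "\<not> E a v"
  moreover obtain f where "f \<in> C l" "E v f" using obtain_C_nbr[OF idx(3) v(1)] .
  ultimately show False
    using assms by - (rule no_induced_2P3[of y a y' z f v], simp_all only: frame_simps)
qed

lemma A_nbr_in_every_class:
  assumes a: "a \<in> A" and i: "i \<in> {1..t}"
    and y: "y \<in> B i" "y' \<in> B i" "E a y" "E a y'" "\<not> E y y'" "y \<noteq> y'"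
    and j: "j \<in> {1..t}"
  shows "\<exists>x\<in>B j. E a x"
proof (cases "j = i")
  case True
  then show ?thesis using y by blast
next
  case False
  obtain v where v: "v \<in> B j" using B_nonempty[OF j] by blast
  obtain m where m: "m \<in> {1..t}" "m \<noteq> i" "m \<noteq> j" using obtain_third_index[OF i j] .
  obtain z where z: "z \<in> C m" using C_nonempty[OF m(1)] by blast
  have "\<not> E y z" "\<not> E y' z" using y z i m by (simp_all only: frame_simps)
  then have "E a v"
    using A_adj_by_nonadj_pair[OF a i i j m(1) y(1,2) y(3-6) v _ _ z m(3)] False by blast
  then show ?thesis using v by blast
qed

lemma induced_pentagon_across_classes:
  assumes a: "a \<in> A" and s: "2 \<le> s"
    and reps: "\<And>k. k \<in> {1..s} \<Longrightarrow>
      cls k \<in> {1..t} \<and> \<beta> k \<in> B (cls k) \<and> \<gamma> k \<in> C (cls k) \<and> E a (\<beta> k) \<and> E (\<beta> k) (\<gamma> k)"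
    and same_class: "\<And>k l. k \<in> {1..s} \<Longrightarrow> l \<in> {1..s} \<Longrightarrow> k \<noteq> l \<Longrightarrow> cls k = cls l \<Longrightarrow>
      \<not> E (\<beta> k) (\<beta> l) \<and> \<not> E (\<beta> k) (\<gamma> l) \<and> E (\<gamma> k) (\<gamma> l)"
  shows "induced_sub (pent_V s) (pent_E s) V E"
proof (rule induced_pentagon[OF graph s A_in_V[OF a]])
  fix k l assume k: "k \<in> {1..s}" and l: "l \<in> {1..s}"
  note rk = reps[OF k] and rl = reps[OF l]
  show "\<beta> k \<in> V \<and> \<gamma> k \<in> V" using rk B_in_V C_in_V by blast
  show "E a (\<beta> k) \<and> \<not> E a (\<gamma> k)" using rk a A_C_nonadj by blast
  show "\<not> E (\<beta> k) (\<beta> l)"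
    using same_class[OF k l] B_B_nonadj[of "\<beta> k" "cls k" "\<beta> l" "cls l"] rk rl by (cases "k = l") auto
  show "E (\<beta> k) (\<gamma> l) \<longleftrightarrow> k = l"
    using same_class[OF k l] B_C_nonadj[of "\<beta> k" "cls k" "\<gamma> l" "cls l"] rk rl by (cases "k = l") auto
  show "E (\<gamma> k) (\<gamma> l)" if "k \<noteq> l"
    using same_class[OF k l that] C_C_adj[of "\<gamma> k" "cls k" "\<gamma> l" "cls l"] rk rl by (cases "cls k = cls l") auto
qed

text \<open>The \<open>t + 1\<close> matched pairs of the pentagon are \<open>b c\<close>, \<open>b' c'\<close> (with the extra index \<open>t + 1\<close>) and,
  for every other class, a neighbour of \<open>a\<close> in it together with one of its \<open>C\<close>-neighbours.\<close>
lemma no_private_pair_in_nbhd: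
  assumes a: "a \<in> A" and i: "i \<in> {1..t}"
    and b: "b \<in> B i" "b' \<in> B i" "E a b" "E a b'" "\<not> E b b'"
    and c: "c \<in> C i" "c' \<in> C i" "E b c" "E b' c'" "\<not> E b c'" "\<not> E b' c"
    and nbrs: "\<forall>j\<in>{1..t}. \<exists>x\<in>B j. E a x"
  shows False
proof -
  obtain g where g: "\<forall>j\<in>{1..t}. g j \<in> B j \<and> E a (g j)" using nbrs by metis
  have "\<forall>j\<in>{1..t}. \<exists>y. y \<in> C j \<and> E (g j) y" using g obtain_C_nbr by metis
  then obtain h where h: "\<forall>j\<in>{1..t}. h j \<in> C j \<and> E (g j) (h j)" by metis
  define cls where "cls k = (if k = t + 1 then i else k)" for k
  define \<beta> where "\<beta> k = (if k = i then b else if k = t + 1 then b' else g k)" for k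
  define \<gamma> where "\<gamma> k = (if k = i then c else if k = t + 1 then c' else h k)" for k
  have "E c c'" "E c' c" using C_clique[OF i c(1,2)] C_clique[OF i c(2,1)] c(3,5) by blast+
  then have "induced_sub (pent_V (t + 1)) (pent_E (t + 1)) V E"
    using t_ge_3 i g h b c E_sym
    by (intro induced_pentagon_across_classes[OF a, where cls = cls and \<beta> = \<beta> and \<gamma> = \<gamma>])
      (auto simp: cls_def \<beta>_def \<gamma>_def split: if_splits)
  then show False using free_pentagon unfolding free_of_def by blast
qed

lemma no_common_A_nbr_of_nonadj_pair:
  assumes i: "i \<in> {1..t}" and b: "b \<in> B i" "b' \<in> B i" "b \<noteq> b'" "\<not> E b b'"
    and a: "a \<in> A" "E a b" "E a b'"
  shows False
proof (cases "\<exists>c\<in>C i. E b c \<and> E b' c")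
  case True
  then obtain c where "c \<in> C i" "E b c" "E b' c" by blast
  then show False
    using assms by - (rule no_induced_C4[of a b c b'], simp_all only: frame_simps)
next
  case False
  obtain c where c: "c \<in> C i" "E b c" using obtain_C_nbr[OF i b(1)] .
  obtain c' where c': "c' \<in> C i" "E b' c'" using obtain_C_nbr[OF i b(2)] .
  have "\<not> E b' c" "\<not> E b c'" using False c c' by blast+
  moreover have "\<forall>j\<in>{1..t}. \<exists>x\<in>B j. E a x"
    using A_nbr_in_every_class[OF a(1) i b(1,2) a(2,3) b(4,3)] by blast
  ultimately show False
    using no_private_pair_in_nbhd[OF a(1) i b(1,2) a(2,3) b(4) c(1) c'(1) c(2) c'(2)] by blast
qed

lemma A_adj_transfer:
  assumes i: "i \<in> {1..t}" and y: "y \<in> B i" "y' \<in> B i" "\<not> E y y'"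
    and c: "c \<in> C i" "E y c" "E y' c"
    and x: "x \<in> A" "x' \<in> A" "E x y" "\<not> E x y'" "E x' y'" "\<not> E x' y"
    and u: "j \<in> {1..t}" "j \<noteq> i" "u \<in> B j" "E x u"
  shows "E x x' \<longleftrightarrow> E x' u"
proof -
  obtain cu where cu: "cu \<in> C j" "E u cu" using obtain_C_nbr[OF u(1,3)] .
  show ?thesis
  proof
    assume "E x x'"
    show "E x' u"
    proof (rule ccontr)
      assume "\<not> E x' u"
      with assms cu \<open>E x x'\<close> show False
        by - (rule no_induced_C6[of y' x' x u cu c], simp_all only: frame_simps)
    qed
  next
    assume "E x' u"
    show "E x x'"
    proof (rule ccontr)
      assume "\<not> E x x'"
      with assms \<open>E x' u\<close> show False
        by - (rule no_induced_C6[of y x u x' y' c], simp_all only: frame_simps)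
    qed
  qed
qed

lemma C_nbr_shared_by_nonadj_pair:
  assumes i: "i \<in> {1..t}" and b: "b \<in> B i" "b' \<in> B i" "\<not> E b b'"
    and a: "a \<in> A" "E a b" "\<not> E a b'" and c: "c \<in> C i" "E b' c"
  shows "E b c"
proof (rule ccontr)
  assume "\<not> E b c"
  moreover obtain k e where e: "k \<in> {1..t}" "k \<noteq> i" "e \<in> B k" "E a e"
    using obtain_A_nbr_outside[OF a(1)] .
  moreover obtain l where l: "l \<in> {1..t}" "l \<noteq> i" "l \<noteq> k" using obtain_third_index[OF i e(1)] .
  moreover obtain w where "w \<in> C l" using C_nonempty[OF l(1)] by blast
  ultimately show False
    using assms by - (rule no_induced_2P3[of b a e b' c w], simp_all only: frame_simps)
qed

lemma nonadj_B_pair_adj_A_nbrs: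
  assumes i: "i \<in> {1..t}" and b: "b \<in> B i" "b' \<in> B i" "\<not> E b b'" and c: "c \<in> C i" "E b c" "E b' c"
    and a: "a \<in> A" "a' \<in> A" "E a b" "\<not> E a b'" "E a' b'" "\<not> E a' b"
  shows "\<not> E a a'"
proof
  assume aa': "E a a'"
  obtain k e where e: "k \<in> {1..t}" "k \<noteq> i" "e \<in> B k" "E a e" using obtain_A_nbr_outside[OF a(1)] .
  obtain f where f: "f \<in> C k" "E e f" using obtain_C_nbr[OF e(1,3)] .
  obtain l where l: "l \<in> {1..t}" "l \<noteq> i" "l \<noteq> k" using obtain_third_index[OF i e(1)] .
  obtain v w where vw: "v \<in> B l" "w \<in> C l" "E v w" using obtain_B_C_edge[OF l(1)] .
  note transfer = A_adj_transfer[OF i b c a]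
    and transfer' = A_adj_transfer[OF i b(2,1) _ c(1,3,2) a(2,1,5,6,3,4)]
  have "E a' e" using transfer[OF e] aa' by blast
  show False
  proof (cases "E a v")
    case True
    then have "E a' v" using transfer[OF l(1,2) vw(1)] aa' by blast
    with assms aa' e f l vw True \<open>E a' e\<close> show False
      by - (rule no_induced_T0[of a a' b b' e v c f w], simp_all only: frame_simps)
  next
    case False
    then have "\<not> E a' v" using transfer'[OF _ l(1,2) vw(1)] b(3) aa' E_sym by blast
    with assms aa' e f l vw False show False
      by - (rule no_induced_2P3[of b a a' v w f], simp_all only: frame_simps)
  qed
qed

lemma nonadj_B_pair_nonadj_A_nbrs:
  assumes i: "i \<in> {1..t}" and b: "b \<in> B i" "b' \<in> B i" "\<not> E b b'" and c: "c \<in> C i" "E b c" "E b' c"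
    and a: "a \<in> A" "a' \<in> A" "E a b" "\<not> E a b'" "E a' b'" "\<not> E a' b"
  shows "E a a'"
proof (rule ccontr)
  assume aa': "\<not> E a a'"
  obtain k e where e: "k \<in> {1..t}" "k \<noteq> i" "e \<in> B k" "E a e" using obtain_A_nbr_outside[OF a(1)] .
  obtain k' e' where e': "k' \<in> {1..t}" "k' \<noteq> i" "e' \<in> B k'" "E a' e'"
    using obtain_A_nbr_outside[OF a(2)] .
  have "\<not> E a' e" "\<not> E a e'"
    using A_adj_transfer[OF i b c a e] A_adj_transfer[OF i b(2,1) _ c(1,3,2) a(2,1,5,6,3,4) e'] b(3) aa' E_sym
    by blast+
  show False
  proof (cases "E e e'")
    case True
    with assms aa' e e' \<open>\<not> E a' e\<close> \<open>\<not> E a e'\<close> show False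
      by - (rule no_induced_C7[of b a e e' a' b' c], simp_all only: frame_simps)
  next
    case False
    with assms aa' e e' \<open>\<not> E a' e\<close> \<open>\<not> E a e'\<close> show False
      by - (rule no_induced_2P3[of b a e b' a' e'], simp_all only: frame_simps)
  qed
qed

lemma B_clique:
  assumes i: "i \<in> {1..t}" and b: "b \<in> B i" "b' \<in> B i" "b \<noteq> b'"
  shows "E b b'"
proof (rule ccontr)
  assume bb': "\<not> E b b'"
  obtain a where a: "a \<in> A" "E a b" using obtain_A_nbr[OF i b(1)] .
  obtain a' where a': "a' \<in> A" "E a' b'" using obtain_A_nbr[OF i b(2)] .
  have ab': "\<not> E a b'" and a'b: "\<not> E a' b"
    using no_common_A_nbr_of_nonadj_pair[OF i b bb'] no_common_A_nbr_of_nonadj_pair[OF i b(2,1)]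
      a a' b(3) bb' E_sym by blast+
  obtain c where c: "c \<in> C i" "E b' c" using obtain_C_nbr[OF i b(2)] .
  have "E b c" using C_nbr_shared_by_nonadj_pair[OF i b(1,2) bb' a ab' c] .
  then show False
    using nonadj_B_pair_adj_A_nbrs[OF i b(1,2) bb' c(1) _ c(2) a(1) a'(1) a(2) ab' a'(2) a'b]
      nonadj_B_pair_nonadj_A_nbrs[OF i b(1,2) bb' c(1) _ c(2) a(1) a'(1) a(2) ab' a'(2) a'b]
    by blast
qed

lemma nonadj_A_pair_private_nbrs_same_class:
  assumes a: "a \<in> A" "a' \<in> A" "\<not> E a a'"
    and u: "j \<in> {1..t}" "u \<in> B j" "E a u" "E a' u"
    and x: "k \<in> {1..t}" "k \<noteq> j" "x \<in> B k" "E a x" "\<not> E a' x"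
    and x': "k' \<in> {1..t}" "k' \<noteq> j" "x' \<in> B k'" "E a' x'" "\<not> E a x'"
  shows "k = k'"
proof (rule ccontr)
  assume "k \<noteq> k'"
  moreover obtain cx where "cx \<in> C k" "E x cx" using obtain_C_nbr[OF x(1,3)] .
  moreover obtain cx' where "cx' \<in> C k'" "E x' cx'" using obtain_C_nbr[OF x'(1,3)] .
  ultimately show False
    using assms by - (rule no_induced_C7[of a x cx cx' x' a' u], simp_all only: frame_simps)
qed

lemma nonadj_A_pair_no_common_nbr:
  assumes a: "a \<in> A" "a' \<in> A" "a \<noteq> a'" "\<not> E a a'"
    and u: "j \<in> {1..t}" "u \<in> B j" "E a u" "E a' u"
  shows False
proof -
  have a_private: "\<not> E a' y" if "k \<in> {1..t}" "k \<noteq> j" "y \<in> B k" "E a y" for k y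
  proof
    assume "E a' y"
    with a u that show False by - (rule no_induced_C4[of a u a' y], simp_all only: frame_simps)
  qed
  have a'_private: "\<not> E a y" if "k \<in> {1..t}" "k \<noteq> j" "y \<in> B k" "E a' y" for k y
    using a_private that by blast
  note same_class = nonadj_A_pair_private_nbrs_same_class[OF a(1,2,4) u]
  obtain k x where x: "k \<in> {1..t}" "k \<noteq> j" "x \<in> B k" "E a x" using obtain_A_nbr_outside[OF a(1)] .
  obtain k' x' where x': "k' \<in> {1..t}" "k' \<noteq> j" "x' \<in> B k'" "E a' x'"
    using obtain_A_nbr_outside[OF a(2)] .
  have "k = k'" using same_class[OF x a_private[OF x] x' a'_private[OF x']] .
  obtain m where m: "m \<in> {1..t}" "m \<noteq> j" "m \<noteq> k" using obtain_third_index[OF u(1) x(1)] .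
  obtain v cv where v: "v \<in> B m" "cv \<in> C m" "E v cv" using obtain_B_C_edge[OF m(1)] .
  obtain z where z: "z \<in> C k" using C_nonempty[OF x(1)] by blast
  have "\<not> E a v"
  proof
    assume av: "E a v"
    have "m = k'" using same_class[OF m(1,2) v(1) av a_private[OF m(1,2) v(1) av] x' a'_private[OF x']] .
    with \<open>k = k'\<close> m(3) show False by simp
  qed
  moreover have "\<not> E a' v"
  proof
    assume a'v: "E a' v"
    have "k = m" using same_class[OF x a_private[OF x] m(1,2) v(1) a'v a'_private[OF m(1,2) v(1) a'v]] .
    with m(3) show False by simp
  qed
  ultimately show False
    using a u v m z x(1,2) by - (rule no_induced_2P3[of a u a' v cv z], simp_all only: frame_simps)
qed

lemma nonadj_A_pair_common_nbr:
  assumes a: "a \<in> A" "a' \<in> A" "\<not> E a a'"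
  shows "\<exists>j\<in>{1..t}. \<exists>u\<in>B j. E a u \<and> E a' u"
proof (rule ccontr)
  assume no_common: "\<not> ?thesis"
  obtain i k y e where ye: "i \<in> {1..t}" "k \<in> {1..t}" "i \<noteq> k" "y \<in> B i" "E a y" "e \<in> B k" "E a e"
    using A_nbrs_two_classes[OF a(1)] by blast
  have inside: "p = i \<or> p = k" if H: "p \<in> {1..t}" "y' \<in> B p" "E a' y'" for p y'
  proof (rule ccontr)
    assume "\<not> (p = i \<or> p = k)"
    then have "p \<noteq> i" "p \<noteq> k" by blast+
    moreover have "\<not> E a' y" "\<not> E a' e" "\<not> E a y'" using no_common ye H by blast+
    moreover obtain cy' where "cy' \<in> C p" "E y' cy'" using obtain_C_nbr[OF H(1,2)] .
    ultimately show False
      using a ye H by - (rule no_induced_2P3[of y a e a' y' cy'], simp_all only: frame_simps)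
  qed
  obtain p q z z' where z: "p \<in> {1..t}" "q \<in> {1..t}" "p \<noteq> q" "z \<in> B p" "E a' z" "z' \<in> B q" "E a' z'"
    using A_nbrs_two_classes[OF a(2)] by blast
  obtain zi zk where zs: "zi \<in> B i" "E a' zi" "zk \<in> B k" "E a' zk"
    using inside[OF z(1,4,5)] inside[OF z(2,6,7)] z by blast
  have "\<not> E a' y" "\<not> E a' e" "\<not> E a zi" "\<not> E a zk" using no_common ye zs by blast+
  moreover from this have "E y zi" "E e zk" using B_clique ye zs by metis+
  ultimately show False
    using a ye zs by - (rule no_induced_C6[of a y zi a' zk e], simp_all only: frame_simps)
qed

lemma A_clique:
  assumes "a \<in> A" "a' \<in> A" "a \<noteq> a'"
  shows "E a a'"
  using nonadj_A_pair_common_nbr[OF assms(1,2)] nonadj_A_pair_no_common_nbr[OF assms] by blast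

section \<open>Nested neighbourhoods and non-neighbours\<close>

lemma no_crossing_B_C:
  assumes i: "i \<in> {1..t}" and b: "b \<in> B i" "b' \<in> B i" and c: "c \<in> C i" "c' \<in> C i"
    and adj: "E b c" "\<not> E b' c" "E b' c'" "\<not> E b c'"
  shows False
proof -
  have "b \<noteq> b'" "c \<noteq> c'" using adj by blast+
  then have "E b b'" "E c c'" using B_clique[OF i b] C_clique[OF i c] by blast+
  then show False
    using assms by - (rule no_induced_C4[of b c c' b'], simp_all only: frame_simps)
qed

lemma B_nbhds_in_C_nested:
  assumes "i \<in> {1..t}" "b \<in> B i" "b' \<in> B i"
  shows "nbhd V E b \<inter> C i \<subseteq> nbhd V E b' \<inter> C i \<or> nbhd V E b' \<inter> C i \<subseteq> nbhd V E b \<inter> C i"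
  using no_crossing_B_C[OF assms] unfolding nbhd_def by blast

lemma C_nbhds_in_B_nested:
  assumes "i \<in> {1..t}" "c \<in> C i" "c' \<in> C i"
  shows "nbhd V E c \<inter> B i \<subseteq> nbhd V E c' \<inter> B i \<or> nbhd V E c' \<inter> B i \<subseteq> nbhd V E c \<inter> B i"
  using no_crossing_B_C[OF assms(1) _ _ assms(2,3)] E_sym unfolding nbhd_def by blast

lemma no_crossing_A_B:
  assumes a: "a \<in> A" "a' \<in> A" and idx: "i \<in> {1..t}" "j \<in> {1..t}" and y: "y \<in> B i" "y' \<in> B j"
    and adj: "E a y" "\<not> E a' y" "E a' y'" "\<not> E a y'"
  shows False
proof -
  have "E a a'" using A_clique[OF a] adj by blast
  show False
  proof (cases "i = j")
    case True
    with y adj have "E y y'" using B_clique[OF idx(1)] by blast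
    with \<open>E a a'\<close> \<open>i = j\<close> show False
      using assms by - (rule no_induced_C4[of a y y' a'], simp_all only: frame_simps)
  next
    case False
    obtain cy where "cy \<in> C i" "E y cy" using obtain_C_nbr[OF idx(1) y(1)] .
    moreover obtain cy' where "cy' \<in> C j" "E y' cy'" using obtain_C_nbr[OF idx(2) y(2)] .
    ultimately show False
      using assms False \<open>E a a'\<close> by - (rule no_induced_C6[of a y cy cy' y' a'], simp_all only: frame_simps)
  qed
qed

lemma A_nbhds_in_B_nested:
  assumes "a \<in> A" "a' \<in> A"
  shows "nbhd V E a \<inter> Bs \<subseteq> nbhd V E a' \<inter> Bs \<or> nbhd V E a' \<inter> Bs \<subseteq> nbhd V E a \<inter> Bs"
  using no_crossing_A_B[OF assms] unfolding nbhd_def by blast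

lemma A_vertex_nonnbrs_in_one_class:
  assumes a: "a \<in> A" and idx: "i \<in> {1..t}" "j \<in> {1..t}" and y: "y \<in> B i" "y' \<in> B j"
    and adj: "\<not> E a y" "\<not> E a y'"
  shows "i = j"
proof (rule ccontr)
  assume ij: "i \<noteq> j"
  obtain m where m: "m \<in> {1..t}" "m \<noteq> i" "m \<noteq> j" using obtain_third_index[OF idx] .
  obtain z where z: "z \<in> C m" using C_nonempty[OF m(1)] by blast
  have misses_class: "\<not> E a u"
    if H: "p \<in> {1..t}" "q \<in> {1..t}" "p \<noteq> q" "m \<noteq> p" "m \<noteq> q" "x \<in> B p" "x' \<in> B q"
      "\<not> E a x" "\<not> E a x'" "u \<in> B p" for p q x x' u
  proof
    assume "E a u"
    moreover have "E u x" using B_clique[OF H(1,10,6)] \<open>E a u\<close> H(8) by blast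
    moreover obtain cx' where "cx' \<in> C q" "E x' cx'" using obtain_C_nbr[OF H(2,7)] .
    ultimately show False
      using a z m H by - (rule no_induced_2P3[of a u x x' cx' z], simp_all only: frame_simps)
  qed
  obtain k k' u u' where u: "k \<in> {1..t}" "k' \<in> {1..t}" "k \<noteq> k'" "u \<in> B k" "E a u" "u' \<in> B k'" "E a u'"
    using A_nbrs_two_classes[OF a] by blast
  have "k \<noteq> i" "k \<noteq> j" "k' \<noteq> i" "k' \<noteq> j"
    using misses_class[OF idx ij m(2,3) y adj] misses_class[OF idx(2,1) ij[symmetric] m(3,2) y(2,1) adj(2,1)] u
    by blast+
  moreover obtain cy where "cy \<in> C i" "E y cy" using obtain_C_nbr[OF idx(1) y(1)] .
  moreover obtain cy' where "cy' \<in> C j" "E y' cy'" using obtain_C_nbr[OF idx(2) y(2)] .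
  ultimately show False
    using a idx y adj ij u by - (rule no_induced_2P3[of u a u' y cy cy'], simp_all only: frame_simps)
qed

lemma A_nonnbrs_in_one_class:
  assumes a: "a \<in> A" "a' \<in> A" and idx: "i \<in> {1..t}" "j \<in> {1..t}" and y: "y \<in> B i" "y' \<in> B j"
    and adj: "\<not> E a y" "\<not> E a' y'"
  shows "i = j"
proof (cases "E a y'")
  case True
  then have "\<not> E a' y \<or> E a' y" by blast
  then show ?thesis
    using no_crossing_A_B[OF a(2,1) idx y] A_vertex_nonnbrs_in_one_class[OF a(2) idx y] True adj by blast
next
  case False
  then show ?thesis using A_vertex_nonnbrs_in_one_class[OF a(1) idx y adj(1)] by blast
qed

lemma A_complete_to_B_if_t_ge_4:
  assumes t: "4 \<le> t" and a: "a \<in> A" and i: "i \<in> {1..t}" and y: "y \<in> B i"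
  shows "E a y"
proof (rule ccontr)
  assume ay: "\<not> E a y"
  have sees: "E a x" if "j \<in> {1..t}" "j \<noteq> i" "x \<in> B j" for j x
    using A_vertex_nonnbrs_in_one_class[OF a i that(1) y that(3) ay] that(2) by blast
  obtain j where j: "j \<in> {1..t}" "j \<noteq> i" using obtain_third_index[OF i i] by blast
  obtain k where k: "k \<in> {1..t}" "k \<noteq> i" "k \<noteq> j" using obtain_third_index[OF i j(1)] .
  obtain m where m: "m \<in> {1..t}" "m \<noteq> i" "m \<noteq> j" "m \<noteq> k" using obtain_fourth_index[OF t i j(1) k(1)] .
  obtain u u' z where "u \<in> B j" "u' \<in> B k" "z \<in> C m"
    using B_nonempty[OF j(1)] B_nonempty[OF k(1)] C_nonempty[OF m(1)] by blast
  moreover from this have "E a u" "E a u'" using sees j k by blast+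
  moreover from calculation have "\<not> E u u'" "u \<noteq> u'" "\<not> E u z" "\<not> E u' z"
    using j k m by (simp_all only: frame_simps)
  ultimately have "E a y"
    using A_adj_by_nonadj_pair[OF a j(1) k(1) i m(1)] y j k m by blast
  with ay show False ..
qed

lemma A_nonnbr_complete_to_C:
  assumes a: "a \<in> A" and idx: "i \<in> {1..t}" "k \<in> {1..t}" "l \<in> {1..t}" "k \<noteq> i" "l \<noteq> i" "k \<noteq> l"
    and u: "u \<in> B k" "u' \<in> B l" "E a u" "E a u'"
    and w: "w \<in> B i" "\<not> E a w" and d: "d \<in> C i"
  shows "E w d"
proof (rule ccontr)
  assume "\<not> E w d"
  moreover obtain cw where "cw \<in> C i" "E w cw" using obtain_C_nbr[OF idx(1) w(1)] .
  moreover from this have "E cw d" using C_clique[OF idx(1) _ d] \<open>\<not> E w d\<close> by blast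
  ultimately show False
    using assms by - (rule no_induced_2P3[of w cw d u a u'], simp_all only: frame_simps)
qed

lemma B_C_complete_if_A_not_complete:
  assumes a: "a \<in> A" and i: "i \<in> {1..t}" and y: "y \<in> B i" "\<not> E a y"
    and j: "j \<in> {1..t}" and x: "x \<in> B j" and c: "c \<in> C j"
  shows "E x c"
proof (rule ccontr)
  assume xc: "\<not> E x c"
  have sees: "E a u" if "l \<in> {1..t}" "l \<noteq> i" "u \<in> B l" for l u
    using A_vertex_nonnbrs_in_one_class[OF a i that(1) y(1) that(3) y(2)] that(2) by blast
  obtain k where k: "k \<in> {1..t}" "k \<noteq> i" "k \<noteq> j" using obtain_third_index[OF i j] .
  obtain l where l: "l \<in> {1..t}" "l \<noteq> i" "l \<noteq> k" using obtain_third_index[OF i k(1)] .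
  obtain u u' where u: "u \<in> B k" "u' \<in> B l" using B_nonempty[OF k(1)] B_nonempty[OF l(1)] by blast
  have au: "E a u" "E a u'" using sees k l u by blast+
  note complete = A_nonnbr_complete_to_C[OF a i k(1) l(1) k(2) l(2) l(3)[symmetric] u au]
  show False
  proof (cases "j = i")
    case False
    have "\<not> E x u" "x \<noteq> u" "\<not> E u c" using x u c j k by (simp_all only: frame_simps)
    then have "E a y"
      using A_adj_by_nonadj_pair[OF a j k(1) i j x u(1) sees[OF j False x] au(1)] y(1) False k c xc
      by blast
    with y(2) show False ..
  next
    case True
    show False
    proof (cases "E a x")
      case False
      then show False using complete \<open>j = i\<close> x c xc by blast
    next
      case True
      obtain cu where "cu \<in> C k" "E u cu" using obtain_C_nbr[OF k(1) u(1)] .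
      moreover have "E x y" "E y c" using B_clique[OF i] x y complete c True \<open>j = i\<close> by blast+
      ultimately show False
        using a y xc c x u au(1) k True \<open>j = i\<close> i
        by - (rule no_induced_C6[of a x y c cu u], simp_all only: frame_simps)
    qed
  qed
qed

lemma finite_V: "finite V"
  using graph unfolding graph_def by blast

lemma finite_nbhd: "finite (nbhd V E x)"
  unfolding nbhd_def using finite_V by simp

lemma finite_A: "finite A" and finite_B: "finite Bs" and finite_C: "finite Cs"
  using finite_V partition unfolding is_partition3_def by (auto intro: finite_subset)

lemma vertex_cases:
  assumes "x \<in> V"
  obtains "x \<in> A" | i where "i \<in> {1..t}" "x \<in> B i" | i where "i \<in> {1..t}" "x \<in> C i"
  using assms partition unfolding is_partition3_def by blast

lemma deg_split:
  assumes "nbhd V E x = X \<union> Y" "X \<inter> Y = {}"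
  shows "deg V E x = card X + card Y"
  using assms finite_nbhd card_Un_disjoint unfolding deg_def by (metis finite_Un)

lemma deg_A:
  assumes a: "a \<in> A"
  shows "deg V E a = (card A - 1) + card (nbhd V E a \<inter> Bs)"
proof -
  have "nbhd V E a = (A - {a}) \<union> (nbhd V E a \<inter> Bs)"
  proof (intro equalityI subsetI)
    fix u assume u: "u \<in> nbhd V E a"
    then have "u \<in> V" "E a u" unfolding nbhd_def by auto
    then show "u \<in> (A - {a}) \<union> (nbhd V E a \<inter> Bs)"
      using u a by (cases rule: vertex_cases) (auto simp: A_C_nonadj)
  next
    fix u assume "u \<in> (A - {a}) \<union> (nbhd V E a \<inter> Bs)"
    then show "u \<in> nbhd V E a" using A_clique[OF a] unfolding nbhd_def by auto
  qed
  moreover have "(A - {a}) \<inter> (nbhd V E a \<inter> Bs) = {}" using A_B_neq by blast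
  ultimately show ?thesis using deg_split a finite_A by simp
qed

lemma deg_B:
  assumes i: "i \<in> {1..t}" and b: "b \<in> B i"
  shows "deg V E b = (card (nbhd V E b \<inter> A) + (card (B i) - 1)) + card (nbhd V E b \<inter> C i)"
proof -
  have "nbhd V E b = ((nbhd V E b \<inter> A) \<union> (B i - {b})) \<union> (nbhd V E b \<inter> C i)"
  proof (intro equalityI subsetI)
    fix u assume u: "u \<in> nbhd V E b"
    then have "u \<in> V" "E b u" unfolding nbhd_def by auto
    then show "u \<in> ((nbhd V E b \<inter> A) \<union> (B i - {b})) \<union> (nbhd V E b \<inter> C i)"
    proof (cases rule: vertex_cases)
      case (2 j)
      then show ?thesis using u B_B_nonadj[OF b 2(2) i 2(1)] \<open>E b u\<close> by (cases "j = i") auto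
    next
      case (3 j)
      then show ?thesis using u B_C_nonadj[OF b 3(2) i 3(1)] \<open>E b u\<close> by (cases "j = i") auto
    qed (use u in auto)
  next
    fix u assume "u \<in> ((nbhd V E b \<inter> A) \<union> (B i - {b})) \<union> (nbhd V E b \<inter> C i)"
    then show "u \<in> nbhd V E b" using B_clique[OF i b] i unfolding nbhd_def by auto
  qed
  moreover have "((nbhd V E b \<inter> A) \<union> (B i - {b})) \<inter> (nbhd V E b \<inter> C i) = {}"
    "(nbhd V E b \<inter> A) \<inter> (B i - {b}) = {}"
    using i A_B_neq A_C_neq B_C_neq by blast+
  moreover have "finite (B i)" using finite_B i by (meson UN_upper finite_subset)
  ultimately show ?thesis
    using deg_split finite_A b by (simp add: card_Un_disjoint)
qed

lemma deg_C:
  assumes i: "i \<in> {1..t}" and c: "c \<in> C i"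
  shows "deg V E c = (card Cs - 1) + card (nbhd V E c \<inter> B i)"
proof -
  have "nbhd V E c = (Cs - {c}) \<union> (nbhd V E c \<inter> B i)"
  proof (intro equalityI subsetI)
    fix u assume u: "u \<in> nbhd V E c"
    then have "u \<in> V" "E c u" unfolding nbhd_def by auto
    then show "u \<in> (Cs - {c}) \<union> (nbhd V E c \<inter> B i)"
    proof (cases rule: vertex_cases)
      case (2 j)
      then show ?thesis using u B_C_nonadj[OF 2(2) c 2(1) i] \<open>E c u\<close> by (cases "j = i") auto
    qed (use u i c A_C_nonadj in auto)
  next
    fix u assume u: "u \<in> (Cs - {c}) \<union> (nbhd V E c \<inter> B i)"
    have "E c u" if "j \<in> {1..t}" "u \<in> C j" "u \<noteq> c" for j
      using C_clique[OF i c] C_C_adj[OF c that(2) i that(1)] that by (cases "j = i") auto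
    then show "u \<in> nbhd V E c" using u unfolding nbhd_def by auto
  qed
  moreover have "(Cs - {c}) \<inter> (nbhd V E c \<inter> B i) = {}" using i B_C_neq by blast
  moreover have "card (Cs - {c}) = card Cs - 1" using finite_C c i by (intro card_Diff_singleton) auto
  ultimately show ?thesis using deg_split by metis
qed

section \<open>Villas and baskets\<close>

lemma cliques: "clique E A \<and> (\<forall>i\<in>{1..t}. clique E (B i) \<and> clique E (C i))"
  unfolding clique_def using A_clique B_clique C_clique by blast

lemma sorted_A_nbhds_decrease:
  assumes \<alpha>: "bij_betw \<alpha> {1..card A} A"
    "\<forall>k. 1 \<le> k \<and> k < card A \<longrightarrow> deg V E (\<alpha> (Suc k)) \<le> deg V E (\<alpha> k)"
  shows "(\<forall>k. 1 \<le> k \<and> k < card A \<longrightarrow> nbhd V E (\<alpha> (Suc k)) \<inter> Bs \<subseteq> nbhd V E (\<alpha> k) \<inter> Bs) \<and>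
    nbhd V E (\<alpha> 1) \<inter> Bs = Bs"
proof
  show dec: "\<forall>k. 1 \<le> k \<and> k < card A \<longrightarrow> nbhd V E (\<alpha> (Suc k)) \<inter> Bs \<subseteq> nbhd V E (\<alpha> k) \<inter> Bs"
    by (rule decreasing_if_sorted_by_card[OF \<alpha> deg_A]) (use finite_nbhd A_nbhds_in_B_nested in auto)
  have "y \<in> nbhd V E (\<alpha> 1)" if H: "i \<in> {1..t}" "y \<in> B i" for i y
  proof -
    obtain x where "x \<in> A" "E x y" using obtain_A_nbr[OF H] .
    then have "y \<in> nbhd V E x \<inter> Bs" using H E_sym unfolding nbhd_def by auto
    then show ?thesis using first_of_decreasing_is_largest[OF \<alpha>(1) dec \<open>x \<in> A\<close>] by blast
  qed
  then show "nbhd V E (\<alpha> 1) \<inter> Bs = Bs" by blast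
qed

lemma A_not_complete_to_B:
  assumes "\<not> complete_to E A Bs"
  shows "t = 3" and "\<exists>i0\<in>{1..3}. \<forall>x\<in>A. Bs - B i0 \<subseteq> nbhd V E x"
    and "\<forall>i\<in>{1..t}. complete_to E (B i) (C i)"
proof -
  obtain a i0 y where a: "a \<in> A" "i0 \<in> {1..t}" "y \<in> B i0" "\<not> E a y"
    using assms unfolding complete_to_def by blast
  show t: "t = 3" using A_complete_to_B_if_t_ge_4[OF _ a(1-3)] a(4) t_ge_3 by fastforce
  have "Bs - B i0 \<subseteq> nbhd V E x" if "x \<in> A" for x
    using A_nonnbrs_in_one_class[OF a(1) that a(2) _ a(3)] a(4) unfolding nbhd_def by fastforce
  then show "\<exists>i0\<in>{1..3}. \<forall>x\<in>A. Bs - B i0 \<subseteq> nbhd V E x" using a(2) t by blast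
  show "\<forall>i\<in>{1..t}. complete_to E (B i) (C i)"
    using B_C_complete_if_A_not_complete[OF a] unfolding complete_to_def by blast
qed

lemma A_complete_to_B_or_basket_shape:
  assumes \<alpha>: "bij_betw \<alpha> {1..card A} A"
    "\<forall>k. 1 \<le> k \<and> k < card A \<longrightarrow> deg V E (\<alpha> (Suc k)) \<le> deg V E (\<alpha> k)"
  shows "complete_to E A Bs \<or>
    (t = 3 \<and>
     (\<exists>i0\<in>{1..3}. Bs - B i0 \<subseteq> nbhd V E (\<alpha> (card A)) \<inter> Bs \<and>
        (\<forall>k. 1 \<le> k \<and> k < card A \<longrightarrow> nbhd V E (\<alpha> (Suc k)) \<inter> Bs \<subseteq> nbhd V E (\<alpha> k) \<inter> Bs) \<and>
        nbhd V E (\<alpha> 1) \<inter> Bs = Bs) \<and>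
     (\<forall>i\<in>{1..3}. complete_to E (B i) (C i)))"
proof (cases "complete_to E A Bs")
  case False
  obtain i0 where i0: "i0 \<in> {1..3}" "\<forall>x\<in>A. Bs - B i0 \<subseteq> nbhd V E x"
    using A_not_complete_to_B(2)[OF False] by blast
  have "\<alpha> (card A) \<in> A"
    using bij_betw_apply[OF \<alpha>(1)] A_nonempty finite_A by (simp add: Suc_leI card_gt_0_iff)
  then have "Bs - B i0 \<subseteq> nbhd V E (\<alpha> (card A)) \<inter> Bs" using i0(2) by blast
  then show ?thesis
    using A_not_complete_to_B(1,3)[OF False] sorted_A_nbhds_decrease[OF \<alpha>] i0(1)
    by (intro disjI2 conjI bexI[of _ i0]) simp_all
qed simp

lemma sorted_B_nbhds_decrease:
  assumes i: "i \<in> {1..t}"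
    and \<beta>: "bij_betw \<beta> {1..card (B i)} (B i)"
      "\<forall>k. 1 \<le> k \<and> k < card (B i) \<longrightarrow> deg V E (\<beta> (Suc k)) \<le> deg V E (\<beta> k)"
  shows "(\<forall>k. 1 \<le> k \<and> k < card (B i) \<longrightarrow> nbhd V E (\<beta> (Suc k)) \<inter> C i \<subseteq> nbhd V E (\<beta> k) \<inter> C i) \<and>
    nbhd V E (\<beta> 1) \<inter> C i = C i"
proof
  show dec: "\<forall>k. 1 \<le> k \<and> k < card (B i) \<longrightarrow> nbhd V E (\<beta> (Suc k)) \<inter> C i \<subseteq> nbhd V E (\<beta> k) \<inter> C i"
  proof (cases "complete_to E A Bs")
    case True
    have "nbhd V E x \<inter> A = A" if "x \<in> B i" for x
      using True that i E_sym unfolding complete_to_def nbhd_def by auto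
    then have "deg V E x = (card A + (card (B i) - 1)) + card (nbhd V E x \<inter> C i)" if "x \<in> B i" for x
      using deg_B[OF i that] that by simp
    then show ?thesis
      by (rule decreasing_if_sorted_by_card[OF \<beta>]) (use finite_nbhd B_nbhds_in_C_nested[OF i] in auto)
  next
    case False
    then have "nbhd V E x \<inter> C i = C i" if "x \<in> B i" for x
      using A_not_complete_to_B(3)[OF False] i that unfolding complete_to_def nbhd_def by auto
    then show ?thesis using bij_betw_apply[OF \<beta>(1)] by auto
  qed
  have "c \<in> nbhd V E (\<beta> 1)" if c: "c \<in> C i" for c
  proof -
    obtain x where "x \<in> B i" "E x c" using obtain_B_nbr[OF i c] .
    then show ?thesis
      using first_of_decreasing_is_largest[OF \<beta>(1) dec] c i C_in_V unfolding nbhd_def by blast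
  qed
  then show "nbhd V E (\<beta> 1) \<inter> C i = C i" by blast
qed

lemma sorted_C_nbhds_decrease:
  assumes i: "i \<in> {1..t}"
    and \<gamma>: "bij_betw \<gamma> {1..card (C i)} (C i)"
      "\<forall>k. 1 \<le> k \<and> k < card (C i) \<longrightarrow> deg V E (\<gamma> (Suc k)) \<le> deg V E (\<gamma> k)"
  shows "(\<forall>k. 1 \<le> k \<and> k < card (C i) \<longrightarrow> nbhd V E (\<gamma> (Suc k)) \<inter> B i \<subseteq> nbhd V E (\<gamma> k) \<inter> B i) \<and>
    nbhd V E (\<gamma> 1) \<inter> B i = B i"
proof
  show dec: "\<forall>k. 1 \<le> k \<and> k < card (C i) \<longrightarrow> nbhd V E (\<gamma> (Suc k)) \<inter> B i \<subseteq> nbhd V E (\<gamma> k) \<inter> B i"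
    by (rule decreasing_if_sorted_by_card[OF \<gamma> deg_C[OF i]]) (use finite_nbhd C_nbhds_in_B_nested[OF i] in auto)
  have "x \<in> nbhd V E (\<gamma> 1)" if x: "x \<in> B i" for x
  proof -
    obtain c where "c \<in> C i" "E x c" using obtain_C_nbr[OF i x] .
    then show ?thesis
      using first_of_decreasing_is_largest[OF \<gamma>(1) dec] x i E_sym B_in_V unfolding nbhd_def by blast
  qed
  then show "nbhd V E (\<gamma> 1) \<inter> B i = B i" by blast
qed

lemma sorted_B_C_nbhds:
  assumes i: "i \<in> {1..t}"
    and \<beta>: "bij_betw \<beta> {1..card (B i)} (B i)"
      "\<forall>k. 1 \<le> k \<and> k < card (B i) \<longrightarrow> deg V E (\<beta> (Suc k)) \<le> deg V E (\<beta> k)"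
    and \<gamma>: "bij_betw \<gamma> {1..card (C i)} (C i)"
      "\<forall>k. 1 \<le> k \<and> k < card (C i) \<longrightarrow> deg V E (\<gamma> (Suc k)) \<le> deg V E (\<gamma> k)"
  shows "({\<gamma> 1} \<subseteq> nbhd V E (\<beta> (card (B i))) \<inter> C i \<and>
      (\<forall>k. 1 \<le> k \<and> k < card (B i) \<longrightarrow> nbhd V E (\<beta> (Suc k)) \<inter> C i \<subseteq> nbhd V E (\<beta> k) \<inter> C i) \<and>
      nbhd V E (\<beta> 1) \<inter> C i = C i) \<and>
    ({\<beta> 1} \<subseteq> nbhd V E (\<gamma> (card (C i))) \<inter> B i \<and>
      (\<forall>k. 1 \<le> k \<and> k < card (C i) \<longrightarrow> nbhd V E (\<gamma> (Suc k)) \<inter> B i \<subseteq> nbhd V E (\<gamma> k) \<inter> B i) \<and>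
      nbhd V E (\<gamma> 1) \<inter> B i = B i)"
proof -
  note \<beta>_nested = sorted_B_nbhds_decrease[OF i \<beta>] and \<gamma>_nested = sorted_C_nbhds_decrease[OF i \<gamma>]
  have "\<beta> (card (B i)) \<in> B i" "\<beta> 1 \<in> B i" "\<gamma> (card (C i)) \<in> C i" "\<gamma> 1 \<in> C i"
    using bij_betw_apply[OF \<beta>(1)] bij_betw_apply[OF \<gamma>(1)] B_nonempty[OF i] C_nonempty[OF i]
      bij_betw_finite[OF \<beta>(1)] bij_betw_finite[OF \<gamma>(1)] by (auto simp: Suc_leI card_gt_0_iff)
  moreover from calculation have "E (\<gamma> 1) (\<beta> (card (B i)))" "E (\<beta> 1) (\<gamma> (card (C i)))"
    using \<beta>_nested \<gamma>_nested unfolding nbhd_def by blast+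
  ultimately show ?thesis
    using \<beta>_nested \<gamma>_nested i E_sym C_in_V B_in_V unfolding nbhd_def by auto
qed

lemma sorted_B_C_nbhds_all:
  assumes \<beta>: "\<forall>i\<in>{1..t}. bij_betw (\<beta> i) {1..card (B i)} (B i) \<and>
      (\<forall>k. 1 \<le> k \<and> k < card (B i) \<longrightarrow> deg V E (\<beta> i (Suc k)) \<le> deg V E (\<beta> i k))"
    and \<gamma>: "\<forall>i\<in>{1..t}. bij_betw (\<gamma> i) {1..card (C i)} (C i) \<and>
      (\<forall>k. 1 \<le> k \<and> k < card (C i) \<longrightarrow> deg V E (\<gamma> i (Suc k)) \<le> deg V E (\<gamma> i k))"
  shows "\<forall>i\<in>{1..t}.
    ({\<gamma> i 1} \<subseteq> nbhd V E (\<beta> i (card (B i))) \<inter> C i \<and>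
      (\<forall>k. 1 \<le> k \<and> k < card (B i) \<longrightarrow> nbhd V E (\<beta> i (Suc k)) \<inter> C i \<subseteq> nbhd V E (\<beta> i k) \<inter> C i) \<and>
      nbhd V E (\<beta> i 1) \<inter> C i = C i) \<and>
    ({\<beta> i 1} \<subseteq> nbhd V E (\<gamma> i (card (C i))) \<inter> B i \<and>
      (\<forall>k. 1 \<le> k \<and> k < card (C i) \<longrightarrow> nbhd V E (\<gamma> i (Suc k)) \<inter> B i \<subseteq> nbhd V E (\<gamma> i k) \<inter> B i) \<and>
      nbhd V E (\<gamma> i 1) \<inter> B i = B i)"
  using sorted_B_C_nbhds \<beta> \<gamma> by blast

lemma villa_if_A_complete_to_B:
  assumes complete: "complete_to E A Bs"
    and \<beta>: "\<forall>i\<in>{1..t}. bij_betw (\<beta> i) {1..card (B i)} (B i) \<and>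
      (\<forall>k. 1 \<le> k \<and> k < card (B i) \<longrightarrow> deg V E (\<beta> i (Suc k)) \<le> deg V E (\<beta> i k))"
  shows "villa_partition V E t A B C"
  unfolding villa_partition_def
proof (intro conjI)
  show "\<forall>i\<in>{1..t}. \<exists>\<beta>. bij_betw \<beta> {1..card (B i)} (B i) \<and>
      nbhd V E (\<beta> (card (B i))) \<inter> C i \<noteq> {} \<and>
      (\<forall>k. 1 \<le> k \<and> k < card (B i) \<longrightarrow> nbhd V E (\<beta> (Suc k)) \<inter> C i \<subseteq> nbhd V E (\<beta> k) \<inter> C i) \<and>
      nbhd V E (\<beta> 1) \<inter> C i = C i"
  proof
    fix i assume i: "i \<in> {1..t}"
    have bij: "bij_betw (\<beta> i) {1..card (B i)} (B i)" using \<beta> i by blast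
    have "1 \<le> card (B i)"
      using B_nonempty[OF i] bij_betw_finite[OF bij] by (simp add: Suc_leI card_gt_0_iff)
    then have "\<beta> i (card (B i)) \<in> B i" using bij_betw_apply[OF bij] by simp
    then obtain c where "c \<in> C i" "E (\<beta> i (card (B i))) c" using obtain_C_nbr[OF i] by blast
    then have "nbhd V E (\<beta> i (card (B i))) \<inter> C i \<noteq> {}" using i C_in_V unfolding nbhd_def by blast
    then show "\<exists>\<beta>. bij_betw \<beta> {1..card (B i)} (B i) \<and>
      nbhd V E (\<beta> (card (B i))) \<inter> C i \<noteq> {} \<and>
      (\<forall>k. 1 \<le> k \<and> k < card (B i) \<longrightarrow> nbhd V E (\<beta> (Suc k)) \<inter> C i \<subseteq> nbhd V E (\<beta> k) \<inter> C i) \<and>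
      nbhd V E (\<beta> 1) \<inter> C i = C i"
      using sorted_B_nbhds_decrease[OF i] \<beta> i by blast
  qed
  show "anticomplete_to E A Cs" using A_C_anticomplete unfolding anticomplete_to_def by blast
qed (use partition A_nonempty B_nonempty C_nonempty cliques complete B_B_anticomplete C_C_complete
    B_C_anticomplete in auto)

lemma basket_if_A_not_complete_to_B:
  assumes nc: "\<not> complete_to E A Bs"
    and \<alpha>: "bij_betw \<alpha> {1..card A} A"
      "\<forall>k. 1 \<le> k \<and> k < card A \<longrightarrow> deg V E (\<alpha> (Suc k)) \<le> deg V E (\<alpha> k)"
  shows "basket_partition V E A B C {}"
proof -
  note t = A_not_complete_to_B(1)[OF nc]
  obtain i0 where i0: "i0 \<in> {1..3}" "\<forall>x\<in>A. Bs - B i0 \<subseteq> nbhd V E x"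
    using A_not_complete_to_B(2)[OF nc] by blast
  have \<alpha>_nested: "(\<forall>k. 1 \<le> k \<and> k < card A \<longrightarrow> nbhd V E (\<alpha> (Suc k)) \<inter> B i0 \<subseteq> nbhd V E (\<alpha> k) \<inter> B i0) \<and>
      nbhd V E (\<alpha> 1) \<inter> B i0 = B i0"
    using sorted_A_nbhds_decrease[OF \<alpha>] i0(1) t by blast
  have parts: "\<forall>i\<in>{1..3}. B i \<noteq> {} \<and> C i \<noteq> {} \<and> clique E (B i) \<and> clique E (C i)"
    "\<forall>i\<in>{1..3}. \<forall>j\<in>{1..3}. i \<noteq> j \<longrightarrow> anticomplete_to E (B i) (B j)"
    "\<forall>i\<in>{1..3}. \<forall>j\<in>{1..3}. i \<noteq> j \<longrightarrow> complete_to E (C i) (C j)"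
    "\<forall>i\<in>{1..3}. \<forall>j\<in>{1..3}. i \<noteq> j \<longrightarrow> anticomplete_to E (B i) (C j)"
    "\<forall>i\<in>{1..3}. complete_to E (B i) (C i)"
    "anticomplete_to E A (\<Union>i\<in>{1..3}. C i)"
    using B_nonempty C_nonempty cliques B_B_anticomplete C_C_complete B_C_anticomplete
      A_not_complete_to_B(3)[OF nc] A_C_anticomplete t unfolding anticomplete_to_def by simp_all
  have "complete_to E A ((\<Union>i\<in>{1..3}. B i) - B i0)"
    using i0(2) t unfolding complete_to_def nbhd_def by blast
  then have alpha: "\<exists>i0\<in>{1..3}. complete_to E A ((\<Union>i\<in>{1..3}. B i) - B i0) \<and>
      (\<exists>\<alpha>. bij_betw \<alpha> {1..card A} A \<and>
        (\<forall>k. 1 \<le> k \<and> k < card A \<longrightarrow> nbhd V E (\<alpha> (Suc k)) \<inter> B i0 \<subseteq> nbhd V E (\<alpha> k) \<inter> B i0) \<and>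
        nbhd V E (\<alpha> 1) \<inter> B i0 = B i0)"
    using i0(1) \<alpha>(1) \<alpha>_nested by blast
  have "is_partition3 V 3 A B C" using partition t by simp
  then show ?thesis
    unfolding basket_partition_def
  proof (intro conjI)
    show "\<exists>j0\<in>{1..3}. complete_to E {} (V - (B j0 \<union> C j0 \<union> {})) \<and> anticomplete_to E {} (B j0 \<union> C j0)"
      unfolding complete_to_def anticomplete_to_def by auto
  qed (use parts alpha A_nonempty cliques in \<open>auto simp: is_partition3_def clique_def\<close>)
qed

end

theorem lemma5p5:
  fixes V :: "'a set" and E :: "'a \<Rightarrow> 'a \<Rightarrow> bool" and t :: nat
    and A :: "'a set" and B C :: "nat \<Rightarrow> 'a set"
    and a :: "nat \<Rightarrow> 'a" and b c :: "nat \<Rightarrow> nat \<Rightarrow> 'a"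
  assumes G: "graph V E"
    and t3: "t \<ge> 3"
    and free: "free_of twoP3_V twoP3_E V E" "free_of (cyc_V 4) (cyc_E 4) V E"
      "free_of (cyc_V 6) (cyc_E 6) V E" "free_of (cyc_V 7) (cyc_E 7) V E"
      "free_of T0_V T0_E V E" "free_of (pent_V (t + 1)) (pent_E (t + 1)) V E"
    and frame: "frame_partition V E t A B C"
    and a_ord: "bij_betw a {1..card A} A"
      "\<forall>k. 1 \<le> k \<and> k < card A \<longrightarrow> deg V E (a (Suc k)) \<le> deg V E (a k)"
    and b_ord: "\<forall>i\<in>{1..t}. bij_betw (b i) {1..card (B i)} (B i) \<and>
      (\<forall>k. 1 \<le> k \<and> k < card (B i) \<longrightarrow> deg V E (b i (Suc k)) \<le> deg V E (b i k))"
    and c_ord: "\<forall>i\<in>{1..t}. bij_betw (c i) {1..card (C i)} (C i) \<and>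
      (\<forall>k. 1 \<le> k \<and> k < card (C i) \<longrightarrow> deg V E (c i (Suc k)) \<le> deg V E (c i k))"
  shows
    "(clique E A \<and> (\<forall>i\<in>{1..t}. clique E (B i) \<and> clique E (C i)))
     \<and> (complete_to E A (\<Union>i\<in>{1..t}. B i) \<or>
        (t = 3 \<and>
         (\<exists>i0\<in>{1..3}.
            (\<Union>i\<in>{1..t}. B i) - B i0 \<subseteq> nbhd V E (a (card A)) \<inter> (\<Union>i\<in>{1..t}. B i) \<and>
            (\<forall>k. 1 \<le> k \<and> k < card A \<longrightarrow>
               nbhd V E (a (Suc k)) \<inter> (\<Union>i\<in>{1..t}. B i) \<subseteq> nbhd V E (a k) \<inter> (\<Union>i\<in>{1..t}. B i)) \<and>
            nbhd V E (a 1) \<inter> (\<Union>i\<in>{1..t}. B i) = (\<Union>i\<in>{1..t}. B i)) \<and>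
         (\<forall>i\<in>{1..3}. complete_to E (B i) (C i))))
     \<and> (\<forall>i\<in>{1..t}.
          ({c i 1} \<subseteq> nbhd V E (b i (card (B i))) \<inter> C i \<and>
           (\<forall>k. 1 \<le> k \<and> k < card (B i) \<longrightarrow>
              nbhd V E (b i (Suc k)) \<inter> C i \<subseteq> nbhd V E (b i k) \<inter> C i) \<and>
           nbhd V E (b i 1) \<inter> C i = C i) \<and>
          ({b i 1} \<subseteq> nbhd V E (c i (card (C i))) \<inter> B i \<and>
           (\<forall>k. 1 \<le> k \<and> k < card (C i) \<longrightarrow>
              nbhd V E (c i (Suc k)) \<inter> B i \<subseteq> nbhd V E (c i k) \<inter> B i) \<and>
           nbhd V E (c i 1) \<inter> B i = B i))
     \<and> (complete_to E A (\<Union>i\<in>{1..t}. B i) \<longrightarrow> villa_partition V E t A B C)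
     \<and> (\<not> complete_to E A (\<Union>i\<in>{1..t}. B i) \<longrightarrow> t = 3 \<and> basket_partition V E A B C {})"
proof -
  interpret t_frame V E t A B C
    by (rule t_frame.intro) (rule G free frame)+
  show ?thesis
    using cliques A_complete_to_B_or_basket_shape[OF a_ord] sorted_B_C_nbhds_all[OF b_ord c_ord]
      villa_if_A_complete_to_B[OF _ b_ord] A_not_complete_to_B(1) basket_if_A_not_complete_to_B[OF _ a_ord]
    by blast
qed

end
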